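(* Let $p\ge2$, $X=\{0,1,\dots,p\}$, and for $v\in X^\infty$ let $\Gamma^p_v$ be the infinite Schreier graph of $\mathcal G_{S_p}$ containing $v$. Then every $\Gamma^p_v$ is either $2p$-ended, or $2$-ended, or $1$-ended. More precisely, writing $E_k=\{w\in X^\infty:\Gamma^p_w\text{ is }k\text{-ended}\}$: (1) $E_{2p}=Cof(0^\infty)\cup Cof(1^\infty)\cup\cdots\cup Cof(p^\infty)$, and it consists of one orbit; (2) $E_2=\Bigl(\bigcup_{i=1}^p\bigcup_{w\in\{0,i\}^\infty}Cof(w)\Bigr)\setminus E_{2p}$, and it consists of uncountably many orbits; (3) $E_1=X^\infty\setminus(E_{2p}\cup E_2)$, and it consists of uncountably many orbits. Moreover $\nu(E_1)=1$.
   Context: $\mathcal G_{S_p}$ is the group generated by the transformations $e_1,\dots,e_p$ of $X^\ast\cup X^\infty$ defined recursively by $e_i(0w)=i\,e_i(w)$, $e_i(iw)=0w$, $e_i(jw)=jw$ for $j\notin\{0,i\}$. $\Gamma^p_v$ has vertex set the $\mathcal G_{S_p}$-orbit of $v$, with an edge joining $u$ and $e_i(u)$ for each vertex $u$ and each $i$. A graph is $k$-ended if it has exactly $k$ ends (the supremum over finite subgraphs $F$ of the number of infinite connected components of the graph minus $F$ equals $k$). $Cof(\xi)$ is the set of infinite words differing from $\xi$ in only finitely many positions. $\nu$ is the uniform (Bernoulli product) measure on $X^\infty$. *)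

theory Defs
  imports "HOL-Probability.Probability"
begin

type_synonym word = "nat \<Rightarrow> nat"

definition Xinf :: "nat \<Rightarrow> word set" where
  "Xinf p = {w. \<forall>n. w n \<le> p}"

text \<open>The generator e_i, the unique transformation satisfying
  e_i(0w) = i e_i(w), e_i(iw) = 0w, e_i(jw) = jw for j not in {0,i}
  (on infinite words; in particular e_i(0^\<infinity>) = i^\<infinity>).\<close>
definition gen :: "nat \<Rightarrow> word \<Rightarrow> word" where
  "gen i w = (\<lambda>n. if (\<forall>m\<le>n. w m = 0) then i
                  else (let k = (LEAST m. w m \<noteq> 0) in
                        if n = k \<and> w k = i then 0 else w n))"

definition adj :: "nat \<Rightarrow> (word \<times> word) set" where
  "adj p = {(u, gen i u) | u i. i \<in> {1..p}} \<union> {(gen i u, u) | u i. i \<in> {1..p}}"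

definition orbit :: "nat \<Rightarrow> word \<Rightarrow> word set" where
  "orbit p v = {w. (v, w) \<in> (adj p)\<^sup>*}"

definition comp :: "nat \<Rightarrow> word set \<Rightarrow> word \<Rightarrow> word set" where
  "comp p S u = {w. (u, w) \<in> (Restr (adj p) S)\<^sup>*}"

definition ecard :: "'a set \<Rightarrow> enat" where
  "ecard A = (if finite A then enat (card A) else \<infinity>)"

definition num_ends :: "nat \<Rightarrow> word \<Rightarrow> enat" where
  "num_ends p v = (SUP F \<in> {F. finite F \<and> F \<subseteq> orbit p v}.
      ecard {comp p (orbit p v - F) u | u. u \<in> orbit p v - F \<and>
                                         infinite (comp p (orbit p v - F) u)})"

definition k_ended :: "nat \<Rightarrow> nat \<Rightarrow> word \<Rightarrow> bool" where
  "k_ended p k v \<longleftrightarrow> num_ends p v = enat k"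

definition E :: "nat \<Rightarrow> nat \<Rightarrow> word set" where
  "E p k = {w \<in> Xinf p. k_ended p k w}"

definition Cof :: "nat \<Rightarrow> word \<Rightarrow> word set" where
  "Cof p \<xi> = {\<eta> \<in> Xinf p. finite {n. \<eta> n \<noteq> \<xi> n}}"

definition nu :: "nat \<Rightarrow> word measure" where
  "nu p = PiM UNIV (\<lambda>_::nat. measure_pmf (pmf_of_set {0..p}))"

end

theory Submission
  imports Defs "HOL-Library.Omega_Words_Fun"
begin

text \<open>The generator \<open>e\<^sub>i\<close> (\<open>gen i\<close>) only rewrites the prefix of a word up to its first nonzero
  letter. Hence an orbit is a union of tail equivalence classes (all eventually constant words
  forming the orbit of \<open>0\<^sup>\<omega>\<close>), and the finite set of words that share a given tail from position
  \<open>n\<close> on is connected. Cutting the orbit along such a tail set leaves at most as many infinite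
  components as the set has boundary vertices. For the orbit of \<open>0\<^sup>\<omega>\<close>, the words constant from
  \<open>n\<close> on have \<open>2p\<close> boundary vertices, and \<open>2p\<close> ends are separated by the eventual letter, or
  by the last nonzero letter for words ending in \<open>0\<^sup>\<omega>\<close>. Any other word \<open>v\<close> with \<open>v n = x \<noteq> 0\<close>
  has a tail class with two boundary vertices. If \<open>v\<close> is eventually in \<open>{0, x}\<^sup>\<omega>\<close>, these lie on
  either side of the bi-infinite line along which \<open>e\<^sub>x\<close> acts as a binary odometer: two ends.
  Otherwise \<open>e\<^sub>x\<close> permutes the tail behind \<open>n\<close> periodically, which joins the two boundary
  vertices outside the tail class: one end. Orbits are countable, each class contains
  uncountably many words, and for \<open>p \<ge> 2\<close> the words eventually in some \<open>{0, i}\<^sup>\<omega>\<close> form a null set.\<close>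

section \<open>Generators acting on words\<close>

lemma first_nonzero:
  fixes s :: "nat word"
  assumes "s \<noteq> (\<lambda>_. 0)"
  obtains k where "s k \<noteq> 0" "\<forall>m<k. s m = 0"
  using assms exists_least_iff[of "\<lambda>m. s m \<noteq> 0"] by auto

lemma gen_first_nonzero:
  assumes "s k \<noteq> 0" "\<forall>m<k. s m = 0"
  shows "gen i s = (\<lambda>m. if m < k then i else if m = k \<and> s k = i then 0 else s m)"
proof -
  have "(LEAST m. s m \<noteq> 0) = k"
    using assms by (intro Least_equality) (auto simp: not_less[symmetric])
  moreover have "(\<forall>m'\<le>m. s m' = 0) \<longleftrightarrow> m < k" for m
    using assms by (meson le_less_trans less_le_not_le linorder_not_le)
  ultimately show ?thesis by (auto simp: gen_def fun_eq_iff)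
qed

lemma gen_zeros: "gen i (\<lambda>_. 0) = (\<lambda>_. i)"
  by (simp add: gen_def)

lemma build_const: "c ## (\<lambda>_. c) = (\<lambda>_. c)"
proof
  show "(c ## (\<lambda>_. c)) n = c" for n by (cases n) simp_all
qed

lemma gen_build: "gen i (c ## w) = (if c = 0 then i ## gen i w else if c = i then 0 ## w else c ## w)"
proof (cases "c = 0")
  case c: True
  show ?thesis
  proof (cases "w = (\<lambda>_. 0)")
    case True
    then show ?thesis using c by (simp add: build_const gen_zeros)
  next
    case False
    then obtain k where k: "w k \<noteq> 0" "\<forall>m<k. w m = 0" by (rule first_nonzero)
    have "gen i (c ## w) = (\<lambda>m. if m < Suc k then i
        else if m = Suc k \<and> (c ## w) (Suc k) = i then 0 else (c ## w) m)"
      by (rule gen_first_nonzero) (use c k in \<open>auto simp: less_Suc_eq_0_disj\<close>)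
    also have "\<dots> = i ## gen i w"
    proof
      show "(\<lambda>m. if m < Suc k then i else if m = Suc k \<and> (c ## w) (Suc k) = i then 0
          else (c ## w) m) n = (i ## gen i w) n" for n
        by (cases n) (simp_all add: gen_first_nonzero[OF k])
    qed
    finally show ?thesis using c by simp
  qed
next
  case False
  show ?thesis
  proof (intro ext)
    show "gen i (c ## w) n = (if c = 0 then i ## gen i w else if c = i then 0 ## w else c ## w) n" for n
      using False by (cases n) (simp_all add: gen_first_nonzero[of "c ## w" 0])
  qed
qed

lemma gen_nth_0: "gen i s 0 = (if s 0 = 0 then i else if s 0 = i then 0 else s 0)"
  by (subst build_split, subst gen_build) simp

lemma suffix_1_gen: "suffix 1 (gen i s) = (if s 0 = 0 then gen i (suffix 1 s) else suffix 1 s)"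
  by (subst build_split, subst gen_build) (simp add: fun_eq_iff)

lemma inj_gen:
  assumes "i \<noteq> 0"
  shows "inj (gen i)"
proof -
  have head: "a 0 = b 0" if "gen i a = gen i b" for a b
    using assms that by (metis gen_nth_0)
  have "\<forall>a b. gen i a = gen i b \<longrightarrow> a m = b m" for m
  proof (induction m)
    case 0
    show ?case using head by blast
  next
    case (Suc m)
    show ?case
    proof (intro allI impI)
      fix a b assume ab: "gen i a = gen i b"
      then have "a 0 = b 0" by (rule head)
      then have "suffix 1 a m = suffix 1 b m"
        using ab Suc.IH suffix_1_gen[of i a] suffix_1_gen[of i b] by metis
      then show "a (Suc m) = b (Suc m)" by simp
    qed
  qed
  then show ?thesis by (auto intro!: injI simp: fun_eq_iff)
qed

lemma gen_nth_cases: "gen i s m = s m \<or> (gen i s m = i \<and> s m = 0) \<or> (gen i s m = 0 \<and> s m = i)"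
  unfolding gen_def Let_def by (cases "\<forall>m'\<le>m. s m' = 0") auto

lemma gen_in_Xinf_iff:
  assumes "i \<le> p"
  shows "gen i u \<in> Xinf p \<longleftrightarrow> u \<in> Xinf p"
proof -
  have "gen i u n \<le> p \<longleftrightarrow> u n \<le> p" for n
    using gen_nth_cases[of i u n] assms by auto
  then show ?thesis by (simp add: Xinf_def)
qed

lemma gen_eq_beyond_nonzero:
  assumes "s k \<noteq> 0" "k < m"
  shows "gen i s m = s m"
proof -
  have "s \<noteq> (\<lambda>_. 0)" using assms(1) by auto
  then obtain k0 where k0: "s k0 \<noteq> 0" "\<forall>m<k0. s m = 0" by (rule first_nonzero)
  have "k0 \<le> k"
  proof (rule ccontr)
    assume "\<not> k0 \<le> k"
    then show False using k0(2) assms(1) by simp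
  qed
  then have "\<not> m < k0" "m \<noteq> k0" using assms(2) by auto
  then show ?thesis by (simp add: gen_first_nonzero[OF k0])
qed

lemma suffix_gen: "s k \<noteq> 0 \<Longrightarrow> k < n \<Longrightarrow> suffix n (gen i s) = suffix n s"
  by (simp add: fun_eq_iff gen_eq_beyond_nonzero)

lemma gen_replicate_zero: "gen i (replicate n 0 \<frown> T) = replicate n i \<frown> gen i T"
  by (induction n) (simp_all add: gen_build)

lemma replicate_zero_suffix: "\<forall>m<n. s m = 0 \<Longrightarrow> replicate n 0 \<frown> suffix n s = s"
  by (simp add: fun_eq_iff conc_def)

lemma gen_const:
  "gen i (\<lambda>_. j) = (if j = 0 then (\<lambda>_. i) else if j = i then 0 ## (\<lambda>_. i) else (\<lambda>_. j))"
proof (cases "j = 0")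
  case True
  then show ?thesis by (simp add: gen_zeros)
next
  case False
  have "gen i (\<lambda>_. j) = gen i (j ## (\<lambda>_. j))" by (simp only: build_const)
  also have "\<dots> = (if j = i then 0 ## (\<lambda>_. j) else j ## (\<lambda>_. j))"
    using False by (simp add: gen_build)
  finally show ?thesis using False by (auto simp: build_const)
qed

lemma rtrancl_Restr_mono:
  assumes "S \<subseteq> S'" "(a, b) \<in> (Restr r S)\<^sup>*"
  shows "(a, b) \<in> (Restr r S')\<^sup>*"
proof -
  have "Restr r S \<subseteq> Restr r S'" using assms(1) by auto
  then show ?thesis using assms(2) rtrancl_mono by blast
qed

lemma adj_iff: "(a, b) \<in> adj p \<longleftrightarrow> (\<exists>i\<in>{1..p}. b = gen i a \<or> a = gen i b)"
  unfolding adj_def by blast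

lemma adj_gen: "i \<in> {1..p} \<Longrightarrow> (a, gen i a) \<in> adj p"
  unfolding adj_iff by blast

lemma sym_Restr_adj: "sym (Restr (adj p) S)"
  unfolding sym_def Int_iff mem_Sigma_iff adj_iff by blast

lemma Restr_adj_rtrancl_sym: "(a, b) \<in> (Restr (adj p) S)\<^sup>* \<Longrightarrow> (b, a) \<in> (Restr (adj p) S)\<^sup>*"
  by (rule symD[OF sym_rtrancl[OF sym_Restr_adj]])

lemma adj_rtrancl_sym: "(a, b) \<in> (adj p)\<^sup>* \<Longrightarrow> (b, a) \<in> (adj p)\<^sup>*"
  using Restr_adj_rtrancl_sym[of a b p UNIV] by simp

lemma adj_Xinf: "(a, b) \<in> adj p \<Longrightarrow> a \<in> Xinf p \<Longrightarrow> b \<in> Xinf p"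
  unfolding adj_iff using gen_in_Xinf_iff by force

lemma orbit_self: "v \<in> orbit p v"
  by (simp add: orbit_def)

lemma orbit_closed: "u \<in> orbit p v \<Longrightarrow> (u, w) \<in> adj p \<Longrightarrow> w \<in> orbit p v"
  unfolding orbit_def by (simp add: rtrancl_into_rtrancl)

lemma orbit_eq: "u \<in> orbit p v \<Longrightarrow> orbit p u = orbit p v"
  unfolding orbit_def using adj_rtrancl_sym by (blast intro: rtrancl_trans)

lemma orbit_subset_Xinf: "v \<in> Xinf p \<Longrightarrow> orbit p v \<subseteq> Xinf p"
proof
  fix w assume v: "v \<in> Xinf p" and "w \<in> orbit p v"
  then have "(v, w) \<in> (adj p)\<^sup>*" by (simp add: orbit_def)
  then show "w \<in> Xinf p" by induction (use v adj_Xinf in auto)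
qed

lemma rtrancl_Restr_adj_orbit:
  assumes "(a, b) \<in> (Restr (adj p) A)\<^sup>*" "a \<in> orbit p v"
  shows "b \<in> orbit p v"
  using assms by (induction rule: rtrancl_induct) (auto intro: orbit_closed)

lemma rtrancl_Restr_orbit:
  assumes "(a, b) \<in> (Restr (adj p) A)\<^sup>*" "a \<in> orbit p v"
  shows "(a, b) \<in> (Restr (adj p) (A \<inter> orbit p v))\<^sup>*"
  using assms(1)
proof (induction rule: rtrancl_induct)
  case (step y z)
  have "y \<in> orbit p v" "z \<in> orbit p v"
    using rtrancl_Restr_adj_orbit[OF step.hyps(1) assms(2)] step.hyps(2) orbit_closed by auto
  then show ?case using step by (auto intro: rtrancl_into_rtrancl)
qed simp

lemma comp_subset: "u \<in> S \<Longrightarrow> comp p S u \<subseteq> S"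
  unfolding comp_def by (auto elim: rtrancl_induct)

lemma comp_self: "u \<in> comp p S u"
  by (simp add: comp_def)

lemma comp_eq: "(u, z) \<in> (Restr (adj p) S)\<^sup>* \<Longrightarrow> comp p S u = comp p S z"
  unfolding comp_def using Restr_adj_rtrancl_sym by (blast intro: rtrancl_trans)

lemma comp_orbit: "comp p (orbit p v) v = orbit p v"
proof
  show "comp p (orbit p v) v \<subseteq> orbit p v" by (rule comp_subset[OF orbit_self])
  show "orbit p v \<subseteq> comp p (orbit p v) v"
    using rtrancl_Restr_orbit[of v _ p UNIV, OF _ orbit_self] by (auto simp: orbit_def comp_def)
qed

section \<open>Tail sets\<close>

definition tail_set :: "nat \<Rightarrow> nat \<Rightarrow> nat word set \<Rightarrow> nat word set" where
  "tail_set p n Q = {z \<in> Xinf p. suffix n z \<in> Q}"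

lemma suffix_Suc_build [simp]: "suffix (Suc n) (c ## s) = suffix n s"
  by (simp add: fun_eq_iff)

lemma suffix_Xinf: "z \<in> Xinf p \<Longrightarrow> suffix n z \<in> Xinf p"
  by (simp add: Xinf_def)

lemma build_Xinf:
  assumes "c \<le> p" "z \<in> Xinf p"
  shows "c ## z \<in> Xinf p"
proof -
  have "(c ## z) n \<le> p" for n using assms by (cases n) (auto simp: Xinf_def)
  then show ?thesis by (simp add: Xinf_def)
qed

lemma conc_Xinf: "set l \<subseteq> {0..p} \<Longrightarrow> z \<in> Xinf p \<Longrightarrow> l \<frown> z \<in> Xinf p"
  by (auto simp: Xinf_def conc_def subset_iff)

lemma tail_set_self: "z \<in> Xinf p \<Longrightarrow> z \<in> tail_set p n {suffix n z}"
  by (simp add: tail_set_def)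

lemma suffix_replicate_conc [simp]: "suffix n (replicate n a \<frown> T) = T"
  by (metis length_replicate suffix_conc_length)

lemma suffix_eq_mono: "suffix n a = suffix n b \<Longrightarrow> n \<le> m \<Longrightarrow> suffix m a = suffix m b"
  by (metis le_add_diff_inverse suffix_suffix)

lemma replicate_Suc_conc: "replicate (Suc n) a \<frown> S = replicate n a \<frown> (a ## S)"
  by (induction n) simp_all

lemma suffix_build_nth: "suffix n z = z n ## suffix (Suc n) z"
  by (simp add: suffix_singleton_suffix)

lemma suffix_replicate_Suc: "suffix n (replicate (Suc n) a \<frown> T) = a ## T"
  by (simp only: replicate_Suc_conc suffix_replicate_conc)

lemma replicate_conc_Xinf: "a \<le> p \<Longrightarrow> T \<in> Xinf p \<Longrightarrow> replicate n a \<frown> T \<in> Xinf p"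
  by (rule conc_Xinf) auto

lemma lift_edge_zero:
  fixes y :: "nat word"
  assumes "i \<in> {1..p}" "0 ## y \<in> R" "i ## gen i y \<in> R" "0 ## gen i y \<in> R"
  shows "(0 ## y, 0 ## gen i y) \<in> (Restr (adj p) R)\<^sup>*"
proof -
  have "(0 ## y, i ## gen i y) \<in> Restr (adj p) R"
    using adj_gen[OF assms(1), of "0 ## y"] assms(2,3) by (simp add: gen_build)
  moreover have "(i ## gen i y, 0 ## gen i y) \<in> Restr (adj p) R"
    using adj_gen[OF assms(1), of "i ## gen i y"] assms by (simp add: gen_build)
  ultimately show ?thesis by (meson r_into_rtrancl rtrancl_into_rtrancl)
qed

lemma lift_path_zero:
  fixes R S :: "nat word set"
  assumes "(r, r') \<in> (Restr (adj p) S)\<^sup>*" "\<forall>s\<in>S. \<forall>c\<le>p. c ## s \<in> R"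
  shows "(0 ## r, 0 ## r') \<in> (Restr (adj p) R)\<^sup>*"
  using assms(1)
proof (induction rule: rtrancl_induct)
  case (step y z)
  then have yz: "y \<in> S" "z \<in> S" and "(y, z) \<in> adj p" by auto
  then obtain i where i: "i \<in> {1..p}" "z = gen i y \<or> y = gen i z" unfolding adj_iff by blast
  have "(0 ## y, 0 ## z) \<in> (Restr (adj p) R)\<^sup>*"
  proof (cases "z = gen i y")
    case True
    then show ?thesis using lift_edge_zero[OF i(1)] assms(2) yz i(1) by auto
  next
    case False
    then have "(0 ## z, 0 ## y) \<in> (Restr (adj p) R)\<^sup>*"
      using i lift_edge_zero[OF i(1)] assms(2) yz by auto
    then show ?thesis by (rule Restr_adj_rtrancl_sym)
  qed
  with step.IH show ?case by (rule rtrancl_trans)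
qed simp

text \<open>Clear the first letter with \<open>gen (z 0)\<close>, then recurse behind the leading 0: an edge
  \<open>s \<longrightarrow> gen i s\<close> lifts to the path \<open>0s \<longrightarrow> i(gen i s) \<longrightarrow> 0(gen i s)\<close>.\<close>
lemma tail_set_connected:
  "z \<in> tail_set p n {T} \<Longrightarrow> (z, replicate n 0 \<frown> T) \<in> (Restr (adj p) (tail_set p n {T}))\<^sup>*"
proof (induction n arbitrary: z)
  case 0
  then show ?case by (simp add: tail_set_def)
next
  case (Suc n)
  define z' where "z' = suffix 1 z"
  have z: "z \<in> Xinf p" "suffix (Suc n) z = T" using Suc.prems by (auto simp: tail_set_def)
  have z': "z' \<in> tail_set p n {T}"
    using z by (simp add: z'_def tail_set_def suffix_Xinf)
  have lift: "\<forall>s\<in>tail_set p n {T}. \<forall>c\<le>p. c ## s \<in> tail_set p (Suc n) {T}"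
    by (auto simp: tail_set_def build_Xinf)
  have "(0 ## z', replicate (Suc n) 0 \<frown> T) \<in> (Restr (adj p) (tail_set p (Suc n) {T}))\<^sup>*"
    using lift_path_zero[OF Suc.IH[OF z'] lift] by simp
  moreover have "(z, 0 ## z') \<in> (Restr (adj p) (tail_set p (Suc n) {T}))\<^sup>*"
  proof (cases "z 0 = 0")
    case True
    have "0 ## z' = z" using build_first[of z] unfolding z'_def True by simp
    then show ?thesis by simp
  next
    case False
    then have "z 0 \<in> {1..p}" "gen (z 0) z = 0 ## z'"
      using z(1) gen_build[of "z 0" "z 0" z'] by (auto simp: z'_def Xinf_def)
    then have "(z, 0 ## z') \<in> adj p" using adj_gen[of "z 0" p z] by simp
    moreover have "0 ## z' \<in> tail_set p (Suc n) {T}" using lift z' by simp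
    ultimately show ?thesis using Suc.prems by auto
  qed
  ultimately show ?case by (rule rtrancl_trans[rotated])
qed

lemma tail_set_subset_orbit:
  assumes "z \<in> tail_set p n {T}"
  shows "tail_set p n {T} \<subseteq> orbit p z"
proof
  fix y assume "y \<in> tail_set p n {T}"
  then have "(replicate n 0 \<frown> T, y) \<in> (Restr (adj p) (tail_set p n {T}))\<^sup>*"
    by (rule Restr_adj_rtrancl_sym[OF tail_set_connected])
  with tail_set_connected[OF assms] have "(z, y) \<in> (Restr (adj p) (tail_set p n {T}))\<^sup>*"
    by (rule rtrancl_trans)
  then show "y \<in> orbit p z" using orbit_self by (rule rtrancl_Restr_adj_orbit)
qed

lemma finite_tail_set:
  assumes "finite Q"
  shows "finite (tail_set p n Q)"
proof -
  have "tail_set p n Q \<subseteq> (\<lambda>(l, T). l \<frown> T) ` ({l. set l \<subseteq> {0..p} \<and> length l = n} \<times> Q)"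
  proof
    fix z assume z: "z \<in> tail_set p n Q"
    show "z \<in> (\<lambda>(l, T). l \<frown> T) ` ({l. set l \<subseteq> {0..p} \<and> length l = n} \<times> Q)"
    proof (rule image_eqI)
      show "z = (\<lambda>(l, T). l \<frown> T) (prefix n z, suffix n z)" by (simp flip: prefix_suffix)
      show "(prefix n z, suffix n z) \<in> {l. set l \<subseteq> {0..p} \<and> length l = n} \<times> Q"
        using z by (auto simp: tail_set_def Xinf_def)
    qed
  qed
  moreover have "finite ({l. set l \<subseteq> {0..p::nat} \<and> length l = n} \<times> Q)"
    using assms by (simp add: finite_lists_length_eq)
  ultimately show ?thesis by (meson finite_imageI finite_subset)
qed

lemma Cof_iff: "\<eta> \<in> Cof p \<xi> \<longleftrightarrow> \<eta> \<in> Xinf p \<and> (\<exists>N. suffix N \<eta> = suffix N \<xi>)"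
proof -
  have "finite {n. \<eta> n \<noteq> \<xi> n} \<longleftrightarrow> (\<exists>N. \<forall>n\<ge>N. \<eta> n = \<xi> n)"
    using eventually_cofinite[of "\<lambda>n. \<eta> n = \<xi> n"]
    by (simp add: cofinite_eq_sequentially eventually_sequentially)
  also have "\<dots> \<longleftrightarrow> (\<exists>N. suffix N \<eta> = suffix N \<xi>)"
  proof -
    have "(\<forall>n\<ge>N. \<eta> n = \<xi> n) \<longleftrightarrow> suffix N \<eta> = suffix N \<xi>" for N
    proof
      assume "\<forall>n\<ge>N. \<eta> n = \<xi> n"
      then show "suffix N \<eta> = suffix N \<xi>" by (simp add: fun_eq_iff)
    next
      assume "suffix N \<eta> = suffix N \<xi>"
      then have "\<eta> (N + k) = \<xi> (N + k)" for k by (metis suffix_nth)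
      then show "\<forall>n\<ge>N. \<eta> n = \<xi> n" by (metis le_add_diff_inverse)
    qed
    then show ?thesis by simp
  qed
  finally show ?thesis by (simp add: Cof_def)
qed

section \<open>Counting ends\<close>

definition inf_comps :: "nat \<Rightarrow> nat word set \<Rightarrow> nat word set set" where
  "inf_comps p S = {comp p S u | u. u \<in> S \<and> infinite (comp p S u)}"

definition boundary :: "nat \<Rightarrow> nat word \<Rightarrow> nat word set \<Rightarrow> nat word set" where
  "boundary p v P = {e \<in> orbit p v - P. \<exists>y\<in>P. (e, y) \<in> adj p}"

lemma num_ends_eq:
  "num_ends p v = (SUP F \<in> {F. finite F \<and> F \<subseteq> orbit p v}. ecard (inf_comps p (orbit p v - F)))"
  unfolding num_ends_def inf_comps_def by simp

lemma num_ends_leI: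
  "(\<And>F. finite F \<Longrightarrow> F \<subseteq> orbit p v \<Longrightarrow> ecard (inf_comps p (orbit p v - F)) \<le> k)
    \<Longrightarrow> num_ends p v \<le> k"
  unfolding num_ends_eq by (rule SUP_least) auto

lemma num_ends_geI:
  "finite F \<Longrightarrow> F \<subseteq> orbit p v \<Longrightarrow> k \<le> ecard (inf_comps p (orbit p v - F)) \<Longrightarrow> k \<le> num_ends p v"
  unfolding num_ends_eq by (rule SUP_upper2[of F]) auto

lemma num_ends_orbit: "u \<in> orbit p v \<Longrightarrow> num_ends p u = num_ends p v"
  unfolding num_ends_def by (simp add: orbit_eq)

lemma ecard_le_card:
  assumes "A \<subseteq> f ` B" "finite B"
  shows "ecard A \<le> enat (card B)"
proof -
  have fin: "finite (f ` B)" using assms(2) by simp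
  have "finite A" using assms(1) fin by (rule finite_subset)
  moreover have "card A \<le> card (f ` B)" using card_mono[OF fin assms(1)] .
  moreover have "card (f ` B) \<le> card B" using assms(2) by (rule card_image_le)
  ultimately show ?thesis by (simp add: ecard_def)
qed

lemma card_le_ecard: "K \<subseteq> A \<Longrightarrow> finite K \<Longrightarrow> enat (card K) \<le> ecard A"
  unfolding ecard_def by (auto simp: card_mono)

lemma walk_to_boundary:
  assumes "u \<in> orbit p v - P" "y \<in> P \<inter> orbit p v"
  shows "\<exists>e\<in>boundary p v P. (u, e) \<in> (Restr (adj p) (orbit p v - P))\<^sup>*"
proof -
  have "(u, y) \<in> (adj p)\<^sup>*"
    using assms orbit_eq unfolding orbit_def by blast
  then show ?thesis using assms
  proof (induction rule: converse_rtrancl_induct)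
    case (step u u')
    show ?case
    proof (cases "u' \<in> P")
      case True
      then have "u \<in> boundary p v P" using step unfolding boundary_def by auto
      then show ?thesis by auto
    next
      case False
      have "u' \<in> orbit p v" using orbit_closed step.hyps(1) step.prems(1) by blast
      then obtain e where "e \<in> boundary p v P" "(u', e) \<in> (Restr (adj p) (orbit p v - P))\<^sup>*"
        using step.IH step.prems(2) False by blast
      moreover have "(u, u') \<in> Restr (adj p) (orbit p v - P)"
        using step.hyps(1) step.prems(1) False \<open>u' \<in> orbit p v\<close> by auto
      ultimately show ?thesis by (meson converse_rtrancl_into_rtrancl)
    qed
  qed simp
qed

lemma finite_boundary:
  assumes "finite P"
  shows "finite (boundary p v P)"
proof -
  have "boundary p v P \<subseteq> (\<Union>y\<in>P. \<Union>i\<in>{1..p}. {gen i y} \<union> gen i -` {y})"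
    unfolding boundary_def adj_iff by auto
  moreover have "finite (\<Union>y\<in>P. \<Union>i\<in>{1..p}. {gen i y} \<union> gen i -` {y})"
    using assms by (auto intro!: finite_vimageI inj_gen)
  ultimately show ?thesis by (rule finite_subset)
qed

text \<open>An infinite component has a vertex outside \<open>P\<close>, and a path from it to \<open>P\<close> first enters
  \<open>P\<close> through a boundary vertex.\<close>
lemma inf_comps_subset_boundary:
  assumes "F \<subseteq> P" "P \<subseteq> orbit p v" "finite P" "P \<noteq> {}"
  shows "inf_comps p (orbit p v - F) \<subseteq> comp p (orbit p v - F) ` boundary p v P"
proof
  fix C assume "C \<in> inf_comps p (orbit p v - F)"
  then obtain u where u: "u \<in> orbit p v - F" "infinite C" "C = comp p (orbit p v - F) u"
    unfolding inf_comps_def by blast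
  have "C - P \<noteq> {}" using u(2) assms(3) by (metis Diff_eq_empty_iff finite_subset)
  then obtain z where z: "z \<in> C" "z \<notin> P" by blast
  then have "z \<in> orbit p v - P" using comp_subset u by blast
  moreover obtain y where "y \<in> P \<inter> orbit p v" using assms(2,4) by blast
  ultimately obtain e where e: "e \<in> boundary p v P" "(z, e) \<in> (Restr (adj p) (orbit p v - P))\<^sup>*"
    using walk_to_boundary by blast
  have "(u, z) \<in> (Restr (adj p) (orbit p v - F))\<^sup>*" using z(1) u(3) by (simp add: comp_def)
  then have "C = comp p (orbit p v - F) z" using u(3) comp_eq by simp
  also have "\<dots> = comp p (orbit p v - F) e"
    by (rule comp_eq, rule rtrancl_Restr_mono[OF _ e(2)]) (use assms(1) in blast)
  finally show "C \<in> comp p (orbit p v - F) ` boundary p v P" using e(1) by blast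
qed

lemma ecard_inf_comps_le_boundary:
  assumes "F \<subseteq> P" "P \<subseteq> orbit p v" "finite P" "P \<noteq> {}"
  shows "ecard (inf_comps p (orbit p v - F)) \<le> enat (card (boundary p v P))"
  using ecard_le_card[OF inf_comps_subset_boundary[OF assms]] finite_boundary[OF assms(3)] .

lemma ecard_inf_comps_le_1:
  assumes "F \<subseteq> P" "P \<subseteq> orbit p v" "finite P" "P \<noteq> {}"
    and "\<forall>e\<in>boundary p v P. (e0, e) \<in> (Restr (adj p) (orbit p v - P))\<^sup>*"
  shows "ecard (inf_comps p (orbit p v - F)) \<le> 1"
proof -
  have "comp p (orbit p v - F) e = comp p (orbit p v - F) e0" if "e \<in> boundary p v P" for e
  proof -
    have "(e0, e) \<in> (Restr (adj p) (orbit p v - F))\<^sup>*"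
      by (rule rtrancl_Restr_mono[OF _ assms(5)[rule_format, OF that]]) (use assms(1) in blast)
    then show ?thesis by (simp add: comp_eq)
  qed
  then have "inf_comps p (orbit p v - F) \<subseteq> comp p (orbit p v - F) ` {e0}"
    using inf_comps_subset_boundary[OF assms(1-4)] by auto
  then have "ecard (inf_comps p (orbit p v - F)) \<le> enat (card {e0})"
    by (rule ecard_le_card) simp
  then show ?thesis by (simp add: one_enat_def)
qed

lemma infinite_meets_boundary_comp:
  assumes "infinite V" "V \<subseteq> orbit p v - P" "P \<subseteq> orbit p v" "finite P" "P \<noteq> {}"
  shows "\<exists>e\<in>boundary p v P. infinite (V \<inter> comp p (orbit p v - P) e)"
proof (rule ccontr)
  assume "\<not> ?thesis"
  then have "finite (\<Union>e\<in>boundary p v P. V \<inter> comp p (orbit p v - P) e)"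
    by (intro finite_UN_I) (use finite_boundary[OF assms(4)] in auto)
  moreover have "V \<subseteq> (\<Union>e\<in>boundary p v P. V \<inter> comp p (orbit p v - P) e)"
  proof
    fix z assume z: "z \<in> V"
    obtain y where "y \<in> P \<inter> orbit p v" using assms(3,5) by blast
    then obtain e where e: "e \<in> boundary p v P" "(z, e) \<in> (Restr (adj p) (orbit p v - P))\<^sup>*"
      using walk_to_boundary z assms(2) by blast
    have "z \<in> comp p (orbit p v - P) e"
      using Restr_adj_rtrancl_sym[OF e(2)] by (simp add: comp_def)
    then show "z \<in> (\<Union>e\<in>boundary p v P. V \<inter> comp p (orbit p v - P) e)" using e(1) z by blast
  qed
  ultimately have "finite V" by (rule finite_subset[rotated])
  then show False using assms(1) by contradiction
qed

lemma comp_label_const: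
  assumes "\<And>x y. (x, y) \<in> Restr (adj p) S \<Longrightarrow> lab x = lab y" "x \<in> comp p S u"
  shows "lab x = lab u"
proof -
  have "(u, x) \<in> (Restr (adj p) S)\<^sup>*" using assms(2) by (simp add: comp_def)
  then show ?thesis using assms(1) by (induction rule: rtrancl_induct) auto
qed

lemma card_labels_le_inf_comps:
  fixes lab :: "nat word \<Rightarrow> 'l"
  assumes P: "P \<subseteq> orbit p v" "finite P" "P \<noteq> {}" and "finite L"
    and lab: "\<And>x y. (x, y) \<in> Restr (adj p) (orbit p v - P) \<Longrightarrow> lab x = lab y"
    and V: "\<And>l. l \<in> L \<Longrightarrow> infinite (V l) \<and> V l \<subseteq> orbit p v - P \<and> (\<forall>x\<in>V l. lab x = l)"
  shows "enat (card L) \<le> ecard (inf_comps p (orbit p v - P))"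
proof -
  have ex: "\<forall>l\<in>L. \<exists>e. e \<in> boundary p v P \<and> infinite (V l \<inter> comp p (orbit p v - P) e)"
  proof
    fix l assume "l \<in> L"
    then have "infinite (V l)" "V l \<subseteq> orbit p v - P" using V by auto
    from infinite_meets_boundary_comp[OF this P] show "\<exists>e. e \<in> boundary p v P \<and> infinite (V l \<inter> comp p (orbit p v - P) e)"
      by blast
  qed
  obtain e where e: "\<And>l. l \<in> L \<Longrightarrow> e l \<in> boundary p v P \<and> infinite (V l \<inter> comp p (orbit p v - P) (e l))"
    using bchoice[OF ex] by blast
  define C where "C l = comp p (orbit p v - P) (e l)" for l
  have lab_comp: "lab x = lab (e l)" if "x \<in> C l" for x l
    using comp_label_const[of p "orbit p v - P" lab x "e l"] lab that by (simp add: C_def)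
  have lab_C: "\<forall>x\<in>C l. lab x = l" if l: "l \<in> L" for l
  proof -
    have "V l \<inter> C l \<noteq> {}" using e[OF l] unfolding C_def by (intro infinite_imp_nonempty) simp
    then obtain x0 where x0: "x0 \<in> V l" "x0 \<in> C l" by blast
    have "lab x0 = l" using V[OF l] x0(1) by blast
    moreover have "lab x0 = lab (e l)" using lab_comp[OF x0(2)] .
    ultimately have "lab (e l) = l" by simp
    then show ?thesis using lab_comp[of _ l] by auto
  qed
  have "inj_on C L"
  proof (rule inj_onI)
    fix l1 l2 assume l: "l1 \<in> L" "l2 \<in> L" "C l1 = C l2"
    have "e l1 \<in> C l1" unfolding C_def by (rule comp_self)
    then have "lab (e l1) = l1" "lab (e l1) = l2" using lab_C[OF l(1)] lab_C[OF l(2)] l(3) by auto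
    then show "l1 = l2" by simp
  qed
  moreover have "C ` L \<subseteq> inf_comps p (orbit p v - P)"
  proof
    fix D assume "D \<in> C ` L"
    then obtain l where l: "l \<in> L" "D = C l" by blast
    have "e l \<in> orbit p v - P" using e[OF l(1)] by (simp add: boundary_def)
    moreover have "infinite (C l)" using e[OF l(1)] unfolding C_def by (meson finite_Int)
    ultimately show "D \<in> inf_comps p (orbit p v - P)" using l unfolding inf_comps_def C_def by blast
  qed
  ultimately show ?thesis using card_le_ecard[of "C ` L"] assms(4) by (simp add: card_image)
qed

lemma infinite_orbit:
  assumes "v \<in> Xinf p" "1 \<le> p"
  shows "infinite (orbit p v)"
proof -
  define f where "f m = v(m := if v m = 0 then 1 else 0)" for m
  have "f m \<in> tail_set p (Suc m) {suffix (Suc m) v}" for m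
    using assms by (auto simp: f_def tail_set_def Xinf_def)
  then have "range f \<subseteq> orbit p v" using tail_set_subset_orbit[OF tail_set_self[OF assms(1)]] by blast
  moreover have "inj f"
  proof (rule injI)
    fix a b assume "f a = f b"
    then have "f a a = f b a" by simp
    then show "a = b" by (auto simp: f_def split: if_splits)
  qed
  ultimately show ?thesis using range_inj_infinite finite_subset by blast
qed

lemma num_ends_ge_1:
  assumes "v \<in> Xinf p" "1 \<le> p"
  shows "1 \<le> num_ends p v"
proof -
  have "orbit p v \<in> inf_comps p (orbit p v - {})"
    unfolding inf_comps_def using comp_orbit infinite_orbit[OF assms] orbit_self by fastforce
  then have "enat (card {orbit p v}) \<le> ecard (inf_comps p (orbit p v - {}))"
    by (intro card_le_ecard) auto
  then show ?thesis using num_ends_geI[of "{}"] by (simp add: one_enat_def)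
qed

text \<open>A generator changes a word only up to its first nonzero letter, so an edge crossing the
  boundary of a tail set joins two words with prefixes \<open>0\<^sup>n\<close> and \<open>i\<^sup>n\<close>.\<close>
lemma boundary_tail_set_cases:
  assumes "e \<in> Xinf p" "e \<notin> tail_set p n Q" "y \<in> tail_set p n Q" "(e, y) \<in> adj p"
  obtains (leave) i T where "i \<in> {1..p}" "T \<in> Q" "gen i T \<notin> Q" "e = replicate n i \<frown> gen i T"
    | (enter) i T where "i \<in> {1..p}" "T \<notin> Q" "gen i T \<in> Q" "e = replicate n 0 \<frown> T"
proof -
  obtain i where i: "i \<in> {1..p}" "e = gen i y \<or> y = gen i e" using assms(4) adj_iff by blast
  have eQ: "suffix n e \<notin> Q" and yQ: "suffix n y \<in> Q" using assms(1-3) by (auto simp: tail_set_def)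
  show thesis
  proof (cases "e = gen i y")
    case True
    then have "\<forall>k<n. y k = 0" using suffix_gen eQ yQ by metis
    then have "e = replicate n i \<frown> gen i (suffix n y)"
      using True gen_replicate_zero replicate_zero_suffix by metis
    then show thesis using leave[OF i(1) yQ] eQ by force
  next
    case False
    then have y: "y = gen i e" using i(2) by blast
    then have "\<forall>k<n. e k = 0" using suffix_gen eQ yQ by metis
    then have "e = replicate n 0 \<frown> suffix n e" "y = replicate n i \<frown> gen i (suffix n e)"
      using y gen_replicate_zero replicate_zero_suffix by metis+
    then show thesis using enter[OF i(1) eQ] yQ by force
  qed
qed

section \<open>Eventually constant words\<close>

definition ev_const :: "nat word \<Rightarrow> bool" where
  "ev_const y \<longleftrightarrow> (\<exists>N j. suffix N y = (\<lambda>_. j))"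

definition const_words :: "nat \<Rightarrow> nat word set" where
  "const_words p = (\<lambda>j _. j) ` {0..p}"

lemma suffix_const [simp]: "suffix n (\<lambda>_. j) = (\<lambda>_. j)"
  by (simp add: fun_eq_iff)

lemma const_in_Xinf: "(\<lambda>_. j) \<in> Xinf p \<longleftrightarrow> j \<le> p"
  by (simp add: Xinf_def)

lemma const_in_const_words: "(\<lambda>_. j) \<in> const_words p \<longleftrightarrow> j \<le> p"
proof
  assume "(\<lambda>_. j) \<in> const_words p"
  then obtain j' where "j' \<le> p" "(\<lambda>_::nat. j) = (\<lambda>_. j')" by (auto simp: const_words_def)
  then show "j \<le> p" by (metis)
qed (auto simp: const_words_def)

lemma ev_const_suffix_eq: "suffix n a = suffix n b \<Longrightarrow> ev_const a \<longleftrightarrow> ev_const b"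
proof -
  have *: "ev_const b" if eq: "suffix n a = suffix n b" and a: "ev_const a" for a b
  proof -
    obtain N j where "suffix N a = (\<lambda>_. j)" using a ev_const_def by blast
    then have "suffix (N + n) a = (\<lambda>_. j)" by (metis suffix_const suffix_suffix)
    moreover have "suffix (N + n) a = suffix (N + n) b" using suffix_eq_mono[OF eq, of "N + n"] by simp
    ultimately show ?thesis unfolding ev_const_def by metis
  qed
  show "suffix n a = suffix n b \<Longrightarrow> ?thesis" using *[of a b] *[of b a] by metis
qed

lemma ev_const_gen_iff: "ev_const (gen i s) \<longleftrightarrow> ev_const s"
proof (cases "s = (\<lambda>_. 0)")
  case True
  then show ?thesis by (auto simp: gen_zeros ev_const_def)
next
  case False
  then obtain k where "s k \<noteq> 0" "\<forall>m<k. s m = 0" by (rule first_nonzero)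
  then show ?thesis using suffix_gen[of s k "Suc k" i] ev_const_suffix_eq by blast
qed

lemma ev_const_in_const_words:
  assumes "y \<in> Xinf p" "ev_const y"
  shows "\<forall>\<^sub>F N in sequentially. suffix N y \<in> const_words p"
proof -
  obtain N j where N: "suffix N y = (\<lambda>_. j)" using assms(2) ev_const_def by blast
  then have "j \<le> p" using assms(1) suffix_Xinf const_in_Xinf by metis
  moreover have "suffix M y = (\<lambda>_. j)" if "M \<ge> N" for M
    using suffix_eq_mono[of N y "\<lambda>_. j" M] N that by simp
  ultimately have "\<forall>M\<ge>N. suffix M y \<in> const_words p" by (simp add: const_in_const_words)
  then show ?thesis unfolding eventually_sequentially by blast
qed

lemma orbit_zeros: "orbit p (\<lambda>_. 0) = {y \<in> Xinf p. ev_const y}"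
proof
  show "orbit p (\<lambda>_. 0) \<subseteq> {y \<in> Xinf p. ev_const y}"
  proof
    fix w assume w: "w \<in> orbit p (\<lambda>_. 0)"
    have "(\<lambda>_. 0) \<in> Xinf p" by (simp add: const_in_Xinf)
    then have "w \<in> Xinf p" using orbit_subset_Xinf w by blast
    moreover have "((\<lambda>_. 0), w) \<in> (adj p)\<^sup>*" using w by (simp add: orbit_def)
    then have "ev_const w"
    proof induction
      case base
      show ?case unfolding ev_const_def by (intro exI) (rule suffix_const)
    next
      case (step y z)
      then show ?case by (auto simp: adj_iff ev_const_gen_iff)
    qed
    ultimately show "w \<in> {y \<in> Xinf p. ev_const y}" by simp
  qed
next
  show "{y \<in> Xinf p. ev_const y} \<subseteq> orbit p (\<lambda>_. 0)"
  proof
    fix y assume y: "y \<in> {y \<in> Xinf p. ev_const y}"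
    then obtain N j where N: "suffix N y = (\<lambda>_. j)" using ev_const_def by blast
    then have j: "j \<le> p" using y suffix_Xinf[of y p N] by (simp add: const_in_Xinf)
    then have "(\<lambda>_. j) \<in> tail_set p N {\<lambda>_. j}" by (simp add: tail_set_def const_in_Xinf)
    from tail_set_subset_orbit[OF this] have "y \<in> orbit p (\<lambda>_. j)"
      using y N by (auto simp: tail_set_def)
    moreover have "(\<lambda>_. j) \<in> orbit p (\<lambda>_. 0)"
    proof (cases "j = 0")
      case False
      then have "((\<lambda>_. 0), (\<lambda>_. j)) \<in> adj p" using adj_gen[of j p "\<lambda>_. 0"] j by (simp add: gen_zeros)
      then show ?thesis using orbit_closed[OF orbit_self] by blast
    qed (simp add: orbit_self)
    then have "orbit p (\<lambda>_. j) = orbit p (\<lambda>_. 0)" by (rule orbit_eq)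
    ultimately show "y \<in> orbit p (\<lambda>_. 0)" by simp
  qed
qed

lemma orbit_ev_const:
  assumes "v \<in> Xinf p" "ev_const v"
  shows "orbit p v = {y \<in> Xinf p. ev_const y}"
proof -
  have "v \<in> orbit p (\<lambda>_. 0)" using assms by (simp add: orbit_zeros)
  then have "orbit p v = orbit p (\<lambda>_. 0)" by (rule orbit_eq)
  then show ?thesis by (simp add: orbit_zeros)
qed

lemma gen_eq_const:
  assumes "i \<noteq> 0" "gen i T = (\<lambda>_. j)"
  shows "T = (if j = 0 then i ## (\<lambda>_. 0) else if j = i then (\<lambda>_. 0) else (\<lambda>_. j))"
proof -
  have "gen i (if j = 0 then i ## (\<lambda>_. 0) else if j = i then (\<lambda>_. 0) else (\<lambda>_. j)) = (\<lambda>_. j)"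
    using assms(1) by (auto simp: gen_build gen_zeros gen_const build_const)
  then have "gen i T = gen i (if j = 0 then i ## (\<lambda>_. 0) else if j = i then (\<lambda>_. 0) else (\<lambda>_. j))"
    by (simp only: assms(2))
  then show ?thesis by (rule injD[OF inj_gen[OF assms(1)]])
qed

lemma boundary_const_tail_set:
  assumes "v \<in> Xinf p" "ev_const v"
  shows "boundary p v (tail_set p N (const_words p))
    \<subseteq> (\<lambda>i. replicate N i \<frown> (0 ## (\<lambda>_. i))) ` {1..p} \<union> (\<lambda>i. replicate N 0 \<frown> (i ## (\<lambda>_. 0))) ` {1..p}"
proof
  fix e assume "e \<in> boundary p v (tail_set p N (const_words p))"
  then obtain y where e: "e \<in> Xinf p" "e \<notin> tail_set p N (const_words p)"
      and y: "y \<in> tail_set p N (const_words p)" "(e, y) \<in> adj p"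
    unfolding boundary_def using orbit_subset_Xinf[OF assms(1)] by blast
  from e y show "e \<in> (\<lambda>i. replicate N i \<frown> (0 ## (\<lambda>_. i))) ` {1..p} \<union> (\<lambda>i. replicate N 0 \<frown> (i ## (\<lambda>_. 0))) ` {1..p}"
  proof (cases rule: boundary_tail_set_cases)
    case (leave i T)
    then obtain j where T: "T = (\<lambda>_. j)" "j \<le> p" by (auto simp: const_words_def)
    have "j = i" using leave(1,3) T by (auto simp: gen_const const_in_const_words split: if_splits)
    then have "e = replicate N i \<frown> (0 ## (\<lambda>_. i))" using leave(1,4) T by (simp add: gen_const)
    then show ?thesis using leave(1) by blast
  next
    case (enter i T)
    then obtain j where j: "gen i T = (\<lambda>_. j)" by (auto simp: const_words_def)
    then have T: "T = (if j = 0 then i ## (\<lambda>_. 0) else if j = i then (\<lambda>_. 0) else (\<lambda>_. j))"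
      using gen_eq_const enter(1) by simp
    have "j = 0"
    proof (rule ccontr)
      assume "j \<noteq> 0"
      then have "T \<in> const_words p"
        using T j enter(1,3) by (auto simp: const_in_const_words)
      then show False using enter(2) by contradiction
    qed
    then have "e = replicate N 0 \<frown> (i ## (\<lambda>_. 0))" using enter(4) T by simp
    then show ?thesis using enter(1) by blast
  qed
qed

lemma num_ends_ev_const_le:
  assumes "v \<in> Xinf p" "ev_const v"
  shows "num_ends p v \<le> enat (2 * p)"
proof (rule num_ends_leI)
  fix F assume F: "finite F" "F \<subseteq> orbit p v"
  have "\<forall>y\<in>F. \<forall>\<^sub>F N in sequentially. suffix N y \<in> const_words p"
  proof
    fix y assume "y \<in> F"
    then have "y \<in> Xinf p" "ev_const y" using F(2) orbit_ev_const[OF assms] by auto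
    then show "\<forall>\<^sub>F N in sequentially. suffix N y \<in> const_words p" by (rule ev_const_in_const_words)
  qed
  from eventually_ball_finite[OF F(1) this]
  obtain N where "\<forall>y\<in>F. suffix N y \<in> const_words p" unfolding eventually_sequentially by blast
  then have "F \<subseteq> tail_set p N (const_words p)"
    using F orbit_ev_const[OF assms] by (auto simp: tail_set_def)
  moreover have "tail_set p N (const_words p) \<subseteq> orbit p v"
    using orbit_ev_const[OF assms] by (auto simp: tail_set_def ev_const_def const_words_def)
  moreover have "(\<lambda>_. 0) \<in> tail_set p N (const_words p)"
    by (auto simp: tail_set_def const_words_def Xinf_def)
  ultimately have "ecard (inf_comps p (orbit p v - F)) \<le> card (boundary p v (tail_set p N (const_words p)))"
    by (intro ecard_inf_comps_le_boundary finite_tail_set) (auto simp: const_words_def)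
  also have "card (boundary p v (tail_set p N (const_words p))) \<le> 2 * p"
  proof -
    let ?B1 = "(\<lambda>i. replicate N i \<frown> (0 ## (\<lambda>_. i))) ` {1..p}"
    let ?B2 = "(\<lambda>i. replicate N 0 \<frown> (i ## (\<lambda>_. 0))) ` {1..p}"
    have "card (boundary p v (tail_set p N (const_words p))) \<le> card (?B1 \<union> ?B2)"
      by (rule card_mono[OF _ boundary_const_tail_set[OF assms]]) simp
    also have "\<dots> \<le> card ?B1 + card ?B2" by (rule card_Un_le)
    also have "\<dots> \<le> p + p"
      by (intro add_mono) (metis card_atLeastAtMost card_image_le diff_Suc_1 finite_atLeastAtMost)+
    finally show ?thesis by simp
  qed
  finally show "ecard (inf_comps p (orbit p v - F)) \<le> enat (2 * p)" by simp
qed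

definition ev_value :: "nat word \<Rightarrow> nat" where
  "ev_value y = (THE j. \<exists>N. suffix N y = (\<lambda>_. j))"

definition last_nonzero :: "nat word \<Rightarrow> nat" where
  "last_nonzero y = y (GREATEST m. y m \<noteq> 0)"

lemma ev_value_eq:
  assumes "suffix N y = (\<lambda>_. j)"
  shows "ev_value y = j"
  unfolding ev_value_def
proof (rule the_equality)
  show "\<exists>N. suffix N y = (\<lambda>_. j)" using assms by blast
next
  fix j' assume "\<exists>N. suffix N y = (\<lambda>_. j')"
  then obtain N' where "suffix N' y = (\<lambda>_. j')" by blast
  then have "y (N' + N) = j'" by (metis suffix_nth)
  moreover have "y (N + N') = j" using assms by (metis suffix_nth)
  ultimately show "j' = j" by (simp add: add.commute)
qed

lemma last_nonzero_eq: "y G \<noteq> 0 \<Longrightarrow> \<forall>m>G. y m = 0 \<Longrightarrow> last_nonzero y = y G"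
  unfolding last_nonzero_def by (metis (mono_tags, lifting) Greatest_equality leI)

lemma last_nonzero_exists:
  assumes "y k \<noteq> 0" "suffix N y = (\<lambda>_. 0)"
  obtains G where "k \<le> G" "y G \<noteq> 0" "\<forall>m>G. y m = 0"
proof -
  have fin: "finite {m. y m \<noteq> 0}"
  proof (rule finite_subset)
    show "{m. y m \<noteq> 0} \<subseteq> {..<N}"
      using assms(2) by (auto simp: fun_eq_iff) (metis le_add_diff_inverse not_less)
  qed simp
  define G where "G = Max {m. y m \<noteq> 0}"
  have ne: "{m. y m \<noteq> 0} \<noteq> {}" using assms(1) by auto
  have "G \<in> {m. y m \<noteq> 0}" "k \<le> G"
    using Max_in[OF fin ne] Max_ge[OF fin] assms(1) by (auto simp: G_def)
  moreover have "\<forall>m>G. y m = 0" using fin G_def Max_ge leD by blast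
  ultimately show thesis using that by blast
qed

lemma last_nonzero_gen:
  assumes k: "s k \<noteq> 0" "\<forall>m<k. s m = 0" and N: "suffix N s = (\<lambda>_. 0)"
    and g: "gen i s \<noteq> (\<lambda>_. 0)"
  shows "last_nonzero (gen i s) = last_nonzero s"
proof -
  note gs = gen_first_nonzero[OF k, of i]
  obtain G where G: "k \<le> G" "s G \<noteq> 0" "\<forall>m>G. s m = 0" using last_nonzero_exists[OF k(1) N] .
  have s_last: "last_nonzero s = s G" using G by (intro last_nonzero_eq) auto
  consider "k < G" | "G = k" "s k = i" | "G = k" "s k \<noteq> i" using G(1) by linarith
  then show ?thesis
  proof cases
    case 1
    have "last_nonzero (gen i s) = gen i s G"
      by (rule last_nonzero_eq) (use 1 G in \<open>auto simp: gs\<close>)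
    then show ?thesis using 1 s_last by (simp add: gs)
  next
    case 2
    have "k \<noteq> 0"
    proof
      assume "k = 0"
      then have "gen i s = (\<lambda>_. 0)" using 2 G(3) by (auto simp: gs fun_eq_iff)
      then show False using g by contradiction
    qed
    then have "last_nonzero (gen i s) = gen i s (k - 1)"
      using 2 G(3) k(1) by (intro last_nonzero_eq) (auto simp: gs)
    then show ?thesis using 2 \<open>k \<noteq> 0\<close> s_last by (simp add: gs)
  next
    case 3
    have "last_nonzero (gen i s) = gen i s k"
      by (rule last_nonzero_eq) (use 3 G k(1) in \<open>auto simp: gs\<close>)
    then show ?thesis using 3 s_last by (simp add: gs)
  qed
qed

text \<open>Away from the constant words, an eventually constant word is stuck in the end named by its
  eventual letter \<open>j \<noteq> 0\<close>, or, when it ends in \<open>0\<^sup>\<omega>\<close>, by its last nonzero letter: a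
  generator only rewrites the prefix up to the first nonzero letter.\<close>
definition end_label :: "nat word \<Rightarrow> nat \<times> nat" where
  "end_label y = (if ev_value y = 0 then (0, last_nonzero y) else (ev_value y, 0))"

lemma end_label_gen:
  assumes "ev_const s" "s \<notin> range (\<lambda>j _. j)" "gen i s \<notin> range (\<lambda>j _. j)"
  shows "end_label (gen i s) = end_label s"
proof -
  have "s \<noteq> (\<lambda>_. 0)" using assms(2) by auto
  then obtain k where k: "s k \<noteq> 0" "\<forall>m<k. s m = 0" by (rule first_nonzero)
  obtain N j where "suffix N s = (\<lambda>_. j)" using assms(1) ev_const_def by blast
  then have N: "suffix (N + Suc k) s = (\<lambda>_. j)" by (metis suffix_const suffix_suffix)
  moreover have "suffix (N + Suc k) (gen i s) = suffix (N + Suc k) s" using suffix_gen k(1) by simp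
  ultimately have ev: "ev_value s = j" "ev_value (gen i s) = j" using ev_value_eq by simp_all
  show ?thesis
  proof (cases "j = 0")
    case True
    have "gen i s \<noteq> (\<lambda>_. 0)" using assms(3) by auto
    then show ?thesis using last_nonzero_gen[OF k] N True ev by (simp add: end_label_def)
  qed (simp add: end_label_def ev)
qed

lemma inj_replicate_zero_build:
  assumes "c \<noteq> 0"
  shows "inj (\<lambda>k. replicate k 0 \<frown> (c ## w))"
proof (rule injI)
  fix k1 k2 :: nat assume eq: "replicate k1 0 \<frown> (c ## w) = replicate k2 0 \<frown> (c ## w)"
  show "k1 = k2"
  proof (cases k1 k2 rule: linorder_cases)
    case less
    then show ?thesis using fun_cong[OF eq, of k1] assms by simp
  next
    case greater
    then show ?thesis using fun_cong[OF eq, of k2] assms by simp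
  qed
qed

lemma end_label_edge:
  assumes "(x, y) \<in> Restr (adj p) ({y \<in> Xinf p. ev_const y} - const_words p)"
  shows "end_label x = end_label y"
proof -
  have not_const: "z \<notin> range (\<lambda>j _. j)" if "z \<in> Xinf p" "z \<notin> const_words p" for z
    using that by (auto simp: const_in_const_words const_in_Xinf)
  obtain i where "y = gen i x \<or> x = gen i y" using assms by (auto simp: adj_iff)
  then show ?thesis
  proof (elim disjE)
    assume "y = gen i x"
    then show ?thesis using end_label_gen[of x i] not_const assms by simp
  next
    assume "x = gen i y"
    then show ?thesis using end_label_gen[of y i] not_const assms by simp
  qed
qed

lemma end_label_ev_letter:
  fixes k :: nat
  assumes "i \<in> {1..p}"
  defines "y \<equiv> replicate (Suc k) 0 \<frown> (i ## (\<lambda>_. i))"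
  shows "y \<in> {y \<in> Xinf p. ev_const y} - const_words p" "end_label y = (i, 0)"
proof -
  have tail: "suffix (Suc k) y = (\<lambda>_. i)" unfolding y_def by (simp only: suffix_replicate_conc build_const)
  have "y 0 \<noteq> y (Suc k)" using assms by (simp add: y_def)
  then have "y \<notin> const_words p" by (auto simp: const_words_def)
  moreover have "y \<in> Xinf p" unfolding y_def using assms by (intro conc_Xinf build_Xinf) (auto simp: const_in_Xinf)
  moreover have "ev_const y" using tail ev_const_def by blast
  ultimately show "y \<in> {y \<in> Xinf p. ev_const y} - const_words p" by simp
  show "end_label y = (i, 0)" using ev_value_eq[OF tail] assms by (simp add: end_label_def)
qed

lemma end_label_last_letter:
  fixes k :: nat
  assumes "i \<in> {1..p}"
  defines "y \<equiv> replicate k 0 \<frown> (i ## (\<lambda>_. 0))"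
  shows "y \<in> {y \<in> Xinf p. ev_const y} - const_words p" "end_label y = (0, i)"
proof -
  have tail: "suffix (Suc k) y = (\<lambda>_. 0)" by (simp add: y_def fun_eq_iff conc_def)
  have "y k \<noteq> y (Suc k)" using assms by (simp add: y_def)
  then have "y \<notin> const_words p" by (auto simp: const_words_def)
  moreover have "y \<in> Xinf p" unfolding y_def using assms by (intro conc_Xinf build_Xinf) (auto simp: const_in_Xinf)
  moreover have "ev_const y" using tail ev_const_def by blast
  ultimately show "y \<in> {y \<in> Xinf p. ev_const y} - const_words p" by simp
  have "y m = 0" if "k < m" for m
  proof -
    have "m - k = Suc (m - Suc k)" using that by simp
    then show ?thesis using that by (simp add: y_def)
  qed
  then have "last_nonzero y = i" using last_nonzero_eq[of y k] assms by (simp add: y_def)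
  then show "end_label y = (0, i)" using ev_value_eq[OF tail] by (simp add: end_label_def)
qed

lemma num_ends_ev_const_ge:
  assumes v: "v \<in> Xinf p" "ev_const v"
  shows "enat (2 * p) \<le> num_ends p v"
proof -
  have ov: "orbit p v = {y \<in> Xinf p. ev_const y}" by (rule orbit_ev_const[OF v])
  have P: "const_words p \<subseteq> orbit p v" "finite (const_words p)" "const_words p \<noteq> {}"
    using ov by (auto simp: const_words_def ev_const_def const_in_Xinf)
  define L :: "(nat \<times> nat) set" where "L = (\<lambda>i. (i, 0)) ` {1..p} \<union> (\<lambda>i. (0, i)) ` {1..p}"
  define V :: "nat \<times> nat \<Rightarrow> nat word set" where
    "V l = (if snd l = 0 then range (\<lambda>k. replicate (Suc k) 0 \<frown> (fst l ## (\<lambda>_. fst l)))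
      else range (\<lambda>k. replicate k 0 \<frown> (snd l ## (\<lambda>_. 0))))" for l
  have "enat (card L) \<le> ecard (inf_comps p (orbit p v - const_words p))"
  proof (rule card_labels_le_inf_comps[where lab = end_label and V = V, OF P])
    show "finite L" by (simp add: L_def)
    show "end_label x = end_label y" if "(x, y) \<in> Restr (adj p) (orbit p v - const_words p)" for x y
      using that ov end_label_edge by simp
  next
    fix l assume "l \<in> L"
    then consider (ev_letter) i where "i \<in> {1..p}" "l = (i, 0)" | (last_letter) i where "i \<in> {1..p}" "l = (0, i)"
      unfolding L_def by blast
    then show "infinite (V l) \<and> V l \<subseteq> orbit p v - const_words p \<and> (\<forall>x\<in>V l. end_label x = l)"
    proof cases
      case (ev_letter i)
      have "inj (\<lambda>k. replicate (Suc k) 0 \<frown> (i ## (\<lambda>_. i)))"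
        using inj_replicate_zero_build[of i "\<lambda>_. i"] ev_letter(1) by (auto simp: inj_def)
      then show ?thesis using ev_letter end_label_ev_letter[of i p] ov
        by (auto simp: V_def range_inj_infinite simp del: replicate_Suc)
    next
      case (last_letter i)
      have "inj (\<lambda>k. replicate k 0 \<frown> (i ## (\<lambda>_. 0)))"
        using inj_replicate_zero_build[of i] last_letter(1) by simp
      then show ?thesis using last_letter end_label_last_letter[of i p] ov
        by (auto simp: V_def range_inj_infinite)
    qed
  qed
  moreover have "card L = 2 * p"
    unfolding L_def by (subst card_Un_disjoint) (auto simp: card_image inj_on_def)
  ultimately have "enat (2 * p) \<le> ecard (inf_comps p (orbit p v - const_words p))" by simp
  then show ?thesis by (rule num_ends_geI[OF P(2,1)])
qed

section \<open>Words that are not eventually constant\<close>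

lemma const_notin_Cof:
  assumes "\<not> ev_const v"
  shows "(\<lambda>_. c) \<notin> Cof p v"
proof
  assume "(\<lambda>_. c) \<in> Cof p v"
  then obtain N where "suffix N v = (\<lambda>_. c)" by (auto simp: Cof_iff)
  then show False using assms unfolding ev_const_def by blast
qed

lemma Cof_suffix_eq: "suffix n a = suffix n b \<Longrightarrow> a \<in> Xinf p \<longleftrightarrow> b \<in> Xinf p \<Longrightarrow> a \<in> Cof p v \<longleftrightarrow> b \<in> Cof p v"
  unfolding Cof_iff by (metis le_add1 le_add2 suffix_eq_mono)

lemma Cof_gen_iff:
  assumes "i \<le> p" "\<not> ev_const v"
  shows "gen i y \<in> Cof p v \<longleftrightarrow> y \<in> Cof p v"
proof (cases "y = (\<lambda>_. 0)")
  case True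
  then show ?thesis using const_notin_Cof[OF assms(2)] by (simp add: gen_zeros)
next
  case False
  then obtain k where "y k \<noteq> 0" "\<forall>m<k. y m = 0" by (rule first_nonzero)
  then show ?thesis
    using Cof_suffix_eq[OF suffix_gen[of y k "Suc k" i]] gen_in_Xinf_iff[OF assms(1)] by simp
qed

lemma orbit_subset_Cof:
  assumes "v \<in> Xinf p" "\<not> ev_const v"
  shows "orbit p v \<subseteq> Cof p v"
proof
  fix w assume "w \<in> orbit p v"
  then have "(v, w) \<in> (adj p)\<^sup>*" by (simp add: orbit_def)
  then show "w \<in> Cof p v"
  proof induction
    case base
    then show ?case using assms(1) by (auto simp: Cof_iff)
  next
    case (step y z)
    then show ?case using Cof_gen_iff[OF _ assms(2)] by (auto simp: adj_iff)
  qed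
qed

lemma finite_subset_tail_set:
  assumes "finite F" "F \<subseteq> Cof p v"
  shows "\<forall>\<^sub>F n in sequentially. F \<subseteq> tail_set p n {suffix n v}"
proof -
  have "\<forall>y\<in>F. \<forall>\<^sub>F n in sequentially. suffix n y = suffix n v"
  proof
    fix y assume "y \<in> F"
    then have "y \<in> Cof p v" using assms(2) by blast
    then obtain N where "suffix N y = suffix N v" unfolding Cof_iff by blast
    then show "\<forall>\<^sub>F n in sequentially. suffix n y = suffix n v"
      unfolding eventually_sequentially using suffix_eq_mono by blast
  qed
  from eventually_ball_finite[OF assms(1) this] show ?thesis
    using assms(2) by (auto simp: tail_set_def Cof_iff elim!: eventually_mono)
qed

lemma not_ev_const_frequently_nonzero: "\<not> ev_const v \<Longrightarrow> \<exists>n\<ge>N. v n \<noteq> 0"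
  unfolding ev_const_def by (metis (full_types) fun_eq_iff le_add1 suffix_nth)

lemma boundary_tail_class:
  assumes v: "v \<in> Xinf p" and x: "v n = x" "x \<noteq> 0"
  defines "w \<equiv> suffix (Suc n) v"
  shows "boundary p v (tail_set p n {suffix n v})
    \<subseteq> {replicate n x \<frown> (0 ## w), replicate (Suc n) 0 \<frown> inv (gen x) w}"
proof
  fix e assume "e \<in> boundary p v (tail_set p n {suffix n v})"
  then obtain y where e: "e \<in> Xinf p" "e \<notin> tail_set p n {x ## w}"
      and y: "y \<in> tail_set p n {x ## w}" "(e, y) \<in> adj p"
    unfolding boundary_def w_def using orbit_subset_Xinf[OF v] x(1) suffix_singleton_suffix by fastforce
  from e y show "e \<in> {replicate n x \<frown> (0 ## w), replicate (Suc n) 0 \<frown> inv (gen x) w}"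
  proof (cases rule: boundary_tail_set_cases)
    case (leave i T)
    then have "gen i (x ## w) \<noteq> x ## w" by simp
    then have "i = x" using x(2) by (auto simp: gen_build split: if_splits)
    then show ?thesis using leave x(2) by (simp add: gen_build)
  next
    case (enter i T)
    obtain c S where T: "T = c ## S" using build_split by blast
    have "c = 0 \<and> i = x \<and> gen x S = w"
      using enter(1-3) x(2) unfolding T by (auto simp: gen_build split: if_splits)
    then have "S = inv (gen x) w" using inj_gen[OF x(2)] by (metis inv_f_f)
    moreover have "e = replicate (Suc n) 0 \<frown> S"
      using enter(4) T \<open>c = 0 \<and> i = x \<and> gen x S = w\<close> by (simp only: replicate_Suc_conc)
    ultimately show ?thesis by simp
  qed
qed

lemma num_ends_not_ev_const_le_2:
  assumes v: "v \<in> Xinf p" "\<not> ev_const v"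
  shows "num_ends p v \<le> 2"
proof (rule num_ends_leI)
  fix F assume F: "finite F" "F \<subseteq> orbit p v"
  obtain N where N: "\<forall>n\<ge>N. F \<subseteq> tail_set p n {suffix n v}"
    using finite_subset_tail_set[OF F(1)] F(2) orbit_subset_Cof[OF v] unfolding eventually_sequentially
    by (meson order_trans)
  obtain n where n: "n \<ge> N" "v n \<noteq> 0" using not_ev_const_frequently_nonzero[OF v(2)] by blast
  have P: "tail_set p n {suffix n v} \<subseteq> orbit p v" "finite (tail_set p n {suffix n v})"
    "tail_set p n {suffix n v} \<noteq> {}"
    using tail_set_subset_orbit[OF tail_set_self[OF v(1)]] finite_tail_set tail_set_self[OF v(1), of n]
    by auto
  have "ecard (inf_comps p (orbit p v - F)) \<le> card (boundary p v (tail_set p n {suffix n v}))"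
    using ecard_inf_comps_le_boundary[OF _ P] N n by simp
  also have "card (boundary p v (tail_set p n {suffix n v}))
      \<le> card {replicate n (v n) \<frown> (0 ## suffix (Suc n) v), replicate (Suc n) 0 \<frown> inv (gen (v n)) (suffix (Suc n) v)}"
    by (rule card_mono[OF _ boundary_tail_class[OF v(1) refl n(2)]]) simp
  also have "\<dots> \<le> 2" by (simp add: card_insert_if)
  finally show "ecard (inf_comps p (orbit p v - F)) \<le> 2" by (simp add: numeral_eq_enat)
qed

lemma gen_gen_build: "c \<in> {0, x} \<Longrightarrow> x \<noteq> 0 \<Longrightarrow> gen x (gen x (c ## u)) = c ## gen x u"
  by (auto simp: gen_build)

lemma gen_funpow_double_build:
  assumes "c \<in> {0, x}" "x \<noteq> 0"
  shows "(gen x ^^ (2 * k)) (c ## u) = c ## (gen x ^^ k) u"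
proof (induction k)
  case (Suc k)
  have "(gen x ^^ (2 * Suc k)) (c ## u) = gen x (gen x ((gen x ^^ (2 * k)) (c ## u)))"
    by (simp add: numeral_2_eq_2)
  then show ?case using Suc gen_gen_build[OF assms] by simp
qed simp

text \<open>On the letters \<open>0, x\<close> the generator \<open>gen x\<close> acts as an odometer, so a word with a letter
  outside \<open>{0, x}\<close> at position \<open>d\<close> has period dividing \<open>2\<^sup>d\<close>.\<close>
lemma gen_funpow_period:
  assumes "x \<noteq> 0" "w d \<notin> {0, x}"
  shows "(gen x ^^ (2 ^ d)) w = w"
  using assms(2)
proof (induction d arbitrary: w)
  case 0
  then have "gen x w = w" using gen_build[of x "w 0" "suffix 1 w"] by simp
  then show ?case by simp
next
  case (Suc d)
  obtain c u where w: "w = c ## u" using build_split by blast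
  show ?case
  proof (cases "c \<in> {0, x}")
    case True
    then show ?thesis using Suc w gen_funpow_double_build[OF True assms(1)] by simp
  next
    case False
    then have "gen x w = w" using w gen_build[of x c u] by auto
    then have "(gen x ^^ n) w = w" for n by (induction n) simp_all
    then show ?thesis .
  qed
qed

lemma gen_funpow_Xinf: "w \<in> Xinf p \<Longrightarrow> x \<le> p \<Longrightarrow> (gen x ^^ k) w \<in> Xinf p"
  by (induction k) (simp_all add: gen_in_Xinf_iff)

text \<open>Each step \<open>0\<^sup>n\<^sup>+\<^sup>1u \<longrightarrow> x\<^sup>n\<^sup>+\<^sup>1(gen x u)\<close> is followed by a return to \<open>0\<^sup>n\<^sup>+\<^sup>1(gen x u)\<close>
  inside the tail set of \<open>gen x u\<close>; this stays off the tail class of \<open>x w\<close> unless \<open>gen x u = w\<close>,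
  where the walk is back at its start.\<close>
lemma odometer_path:
  assumes w: "w \<in> Xinf p" and x: "x \<in> {1..p}"
  shows "(replicate (Suc n) 0 \<frown> w, replicate (Suc n) 0 \<frown> (gen x ^^ k) w)
    \<in> (Restr (adj p) (Xinf p - tail_set p n {x ## w}))\<^sup>*"
proof (induction k)
  case (Suc k)
  let ?R = "Restr (adj p) (Xinf p - tail_set p n {x ## w})"
  let ?u = "(gen x ^^ k) w" and ?u' = "(gen x ^^ Suc k) w"
  show ?case
  proof (cases "?u' = w")
    case False
    have away: "z \<notin> tail_set p n {x ## w}" if "suffix (Suc n) z = ?u'" for z
      using that False suffix_build_nth[of n z] by (auto simp: tail_set_def)
    have uX: "?u \<in> Xinf p" "?u' \<in> Xinf p" using gen_funpow_Xinf[OF w] x by (auto simp del: funpow.simps)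
    let ?a = "replicate (Suc n) 0 \<frown> ?u" and ?b = "replicate (Suc n) x \<frown> ?u'"
      and ?c = "replicate (Suc n) 0 \<frown> ?u'"
    have "?a \<in> Xinf p" by (rule replicate_conc_Xinf[OF _ uX(1)]) simp
    moreover have "?b \<in> Xinf p" by (rule replicate_conc_Xinf[OF _ uX(2)]) (use x in simp)
    moreover have "?a \<notin> tail_set p n {x ## w}"
      using x by (simp add: tail_set_def suffix_replicate_Suc del: replicate_Suc)
    moreover have "?b \<notin> tail_set p n {x ## w}" by (rule away) simp
    moreover have "?b = gen x ?a" by (simp only: gen_replicate_zero funpow.simps o_apply)
    ultimately have ab: "(?a, ?b) \<in> ?R" using adj_gen[OF x] by auto
    have "?b \<in> tail_set p (Suc n) {?u'}"
      using replicate_conc_Xinf[OF _ uX(2)] x by (simp add: tail_set_def del: replicate_Suc)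
    then have "(?b, ?c) \<in> (Restr (adj p) (tail_set p (Suc n) {?u'}))\<^sup>*" by (rule tail_set_connected)
    moreover have "tail_set p (Suc n) {?u'} \<subseteq> Xinf p - tail_set p n {x ## w}"
      using away by (auto simp: tail_set_def)
    ultimately have "(?b, ?c) \<in> ?R\<^sup>*" by (rule rtrancl_Restr_mono[rotated])
    with Suc.IH ab show ?thesis by (meson rtrancl_into_rtrancl rtrancl_trans)
  qed simp
qed simp

lemma Restr_Xinf_path_in_orbit:
  assumes "(a, b) \<in> (Restr (adj p) (Xinf p - P))\<^sup>*" "a \<in> orbit p v" "v \<in> Xinf p"
  shows "(a, b) \<in> (Restr (adj p) (orbit p v - P))\<^sup>*"
proof -
  have "(Xinf p - P) \<inter> orbit p v = orbit p v - P" using orbit_subset_Xinf[OF assms(3)] by blast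
  then show ?thesis using rtrancl_Restr_orbit[OF assms(1,2)] by simp
qed

text \<open>The two boundary vertices of the tail class are joined outside it: one directly, the other by
  running through the finite \<open>gen x\<close>-cycle of the tail behind position \<open>n\<close>.\<close>
lemma boundary_tail_class_connected:
  assumes v: "v \<in> Xinf p" and x: "v n \<in> {1..p}" and m: "Suc n \<le> m" "v m \<notin> {0, v n}"
  defines "c0 \<equiv> replicate (Suc n) 0 \<frown> suffix (Suc n) v"
  shows "\<forall>e\<in>boundary p v (tail_set p n {suffix n v}).
    (c0, e) \<in> (Restr (adj p) (orbit p v - tail_set p n {suffix n v}))\<^sup>*"
proof
  define x where "x = v n"
  define w where "w = suffix (Suc n) v"
  define P where "P = tail_set p n {x ## w}"
  have x: "x \<in> {1..p}" using assms(2) by (simp add: x_def)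
  have w: "w \<in> Xinf p" using v by (simp add: w_def suffix_Xinf)
  have P_eq: "tail_set p n {suffix n v} = P"
    using suffix_build_nth[of n v] by (simp add: P_def x_def w_def)
  define L :: nat where "L = 2 ^ (m - Suc n)"
  have per: "(gen x ^^ L) w = w"
    unfolding L_def using gen_funpow_period[of x w "m - Suc n"] x m by (simp add: w_def x_def)
  have "c0 \<in> tail_set p (Suc n) {suffix (Suc n) v}"
    unfolding tail_set_def c0_def by (simp add: replicate_conc_Xinf suffix_Xinf v del: replicate_Suc)
  then have c0: "c0 \<in> orbit p v" using tail_set_subset_orbit[OF tail_set_self[OF v]] by blast
  fix e assume e: "e \<in> boundary p v (tail_set p n {suffix n v})"
  have "v n \<noteq> 0" using assms(2) by simp
  then have "e = replicate n x \<frown> (0 ## w) \<or> e = replicate (Suc n) 0 \<frown> inv (gen x) w"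
    using boundary_tail_class[OF v refl] e unfolding x_def w_def by blast
  then have "(c0, e) \<in> (Restr (adj p) (Xinf p - P))\<^sup>*"
  proof
    assume e: "e = replicate n x \<frown> (0 ## w)"
    have "e \<in> tail_set p n {0 ## w}"
      using x w e by (auto simp: tail_set_def intro!: replicate_conc_Xinf build_Xinf)
    moreover have "c0 = replicate n 0 \<frown> (0 ## w)" by (simp only: c0_def w_def replicate_Suc_conc)
    ultimately have "(e, c0) \<in> (Restr (adj p) (tail_set p n {0 ## w}))\<^sup>*"
      using tail_set_connected by simp
    moreover have "tail_set p n {0 ## w} \<subseteq> Xinf p - P" using x by (auto simp: tail_set_def P_def)
    ultimately have "(e, c0) \<in> (Restr (adj p) (Xinf p - P))\<^sup>*" by (rule rtrancl_Restr_mono[rotated])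
    then show ?thesis by (rule Restr_adj_rtrancl_sym)
  next
    assume e: "e = replicate (Suc n) 0 \<frown> inv (gen x) w"
    have "0 < L" by (simp add: L_def)
    then have "(gen x ^^ L) w = gen x ((gen x ^^ (L - 1)) w)" by (cases L) simp_all
    then have "gen x ((gen x ^^ (L - 1)) w) = w" using per by simp
    then have "inv (gen x) w = (gen x ^^ (L - 1)) w" using inj_gen x by (intro inv_f_eq) auto
    then show ?thesis using odometer_path[OF w x, of n "L - 1"] by (simp add: e c0_def w_def P_def)
  qed
  then show "(c0, e) \<in> (Restr (adj p) (orbit p v - tail_set p n {suffix n v}))\<^sup>*"
    unfolding P_eq by (rule Restr_Xinf_path_in_orbit[OF _ c0 v])
qed

lemma num_ends_le_1:
  assumes v: "v \<in> Xinf p" "\<not> ev_const v" and C: "\<forall>x\<in>{1..p}. \<not> (\<exists>N. \<forall>m\<ge>N. v m \<in> {0, x})"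
  shows "num_ends p v \<le> 1"
proof (rule num_ends_leI)
  fix F assume F: "finite F" "F \<subseteq> orbit p v"
  obtain N where N: "\<forall>n\<ge>N. F \<subseteq> tail_set p n {suffix n v}"
    using finite_subset_tail_set[OF F(1)] F(2) orbit_subset_Cof[OF v] unfolding eventually_sequentially
    by (meson order_trans)
  obtain n where n: "n \<ge> N" "v n \<noteq> 0" using not_ev_const_frequently_nonzero[OF v(2)] by blast
  have x: "v n \<in> {1..p}" using n(2) v(1) by (auto simp: Xinf_def)
  then have "\<not> (\<forall>m\<ge>Suc n. v m \<in> {0, v n})" using C by blast
  then obtain m where m: "m \<ge> Suc n" "v m \<notin> {0, v n}" by blast
  have "tail_set p n {suffix n v} \<subseteq> orbit p v" by (rule tail_set_subset_orbit[OF tail_set_self[OF v(1)]])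
  moreover have "tail_set p n {suffix n v} \<noteq> {}" using tail_set_self[OF v(1), of n] by auto
  ultimately show "ecard (inf_comps p (orbit p v - F)) \<le> 1"
    using ecard_inf_comps_le_1[OF _ _ finite_tail_set _ boundary_tail_class_connected[OF v(1) x m]] N n(1)
    by simp
qed

section \<open>The line through \<open>{0, x}\<^sup>\<omega>\<close>\<close>

text \<open>Projection onto the line \<open>{0, x}\<^sup>\<omega>\<close>, along which \<open>gen x\<close> acts as an odometer; all other
  edges of the Schreier graph leave the projection fixed (\<open>line_proj_gen\<close>).\<close>
definition line_proj :: "nat \<Rightarrow> nat word \<Rightarrow> nat word" where
  "line_proj x s = (\<lambda>m. if \<exists>r\<ge>m. s r \<notin> {0, x} then 0 else s m)"

lemma line_proj_id: "\<forall>m. s m \<in> {0, x} \<Longrightarrow> line_proj x s = s"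
  by (simp add: line_proj_def)

lemma line_proj_bad: "m \<le> r \<Longrightarrow> s r \<notin> {0, x} \<Longrightarrow> line_proj x s m = 0"
  unfolding line_proj_def by auto

lemma line_proj_good: "\<forall>r\<ge>m. s r \<in> {0, x} \<Longrightarrow> line_proj x s m = s m"
  unfolding line_proj_def by auto

lemma line_proj_eq_beyond:
  assumes "\<forall>r\<ge>m. a r = b r"
  shows "line_proj x a m = line_proj x b m"
proof -
  have "(\<exists>r\<ge>m. a r \<notin> {0, x}) \<longleftrightarrow> (\<exists>r\<ge>m. b r \<notin> {0, x})" "a m = b m" using assms by auto
  then show ?thesis unfolding line_proj_def by (simp only:)
qed

lemma line_proj_gen_bad:
  assumes k: "s k \<noteq> 0" "\<forall>m<k. s m = 0" and bad: "\<exists>r\<ge>k. s r \<notin> {0, x}" and "m \<le> k"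
  shows "line_proj x (gen i s) m = 0"
proof -
  note gs = gen_first_nonzero[OF k, of i]
  show ?thesis
  proof (cases "\<exists>r>k. s r \<notin> {0, x}")
    case True
    then obtain r where "k < r" "s r \<notin> {0, x}" by blast
    then show ?thesis using \<open>m \<le> k\<close> by (intro line_proj_bad[of m r]) (auto simp: gs)
  next
    case False
    then have good: "\<forall>r>k. s r \<in> {0, x}" and sk: "s k \<notin> {0, x}" using bad by (auto simp: le_less)
    consider "s k \<noteq> i" | "s k = i" "m < k" | "s k = i" "m = k" using \<open>m \<le> k\<close> by linarith
    then show ?thesis
    proof cases
      case 1
      then show ?thesis using sk \<open>m \<le> k\<close> by (intro line_proj_bad[of m k]) (auto simp: gs)
    next
      case 2
      then show ?thesis using sk by (intro line_proj_bad[of m m]) (auto simp: gs)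
    next
      case 3
      then have "line_proj x (gen i s) m = gen i s m" using good by (intro line_proj_good) (auto simp: gs)
      then show ?thesis using 3 by (simp add: gs)
    qed
  qed
qed

lemma line_proj_gen_line:
  assumes k: "s k \<noteq> 0" "\<forall>m<k. s m = 0" and line: "\<forall>m. s m \<in> {0, x}" and i: "i \<notin> {0, x}"
    and "m \<le> k"
  shows "line_proj x (gen i s) m = s m"
proof -
  note gs = gen_first_nonzero[OF k, of i]
  have "s k = x" using line[rule_format, of k] k(1) by simp
  show ?thesis
  proof (cases "m = k")
    case True
    then show ?thesis using line i \<open>s k = x\<close> by (subst line_proj_good) (auto simp: gs)
  next
    case False
    then have "m < k" using \<open>m \<le> k\<close> by simp
    then show ?thesis using i k(2) by (subst line_proj_bad[of m m]) (auto simp: gs)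
  qed
qed

lemma line_proj_gen:
  assumes "i \<noteq> 0"
  shows "line_proj x (gen i s) = line_proj x s \<or> (i = x \<and> (\<forall>m. s m \<in> {0, x}))"
proof (cases "s = (\<lambda>_. 0)")
  case True
  show ?thesis
  proof (cases "i = x")
    case False
    have "line_proj x (\<lambda>_. i) = line_proj x (\<lambda>_. 0)"
      using line_proj_bad[of _ _ "\<lambda>_. i" x] False assms by (auto simp: line_proj_def)
    then show ?thesis using True by (simp add: gen_zeros)
  qed (use True in simp)
next
  case False
  then obtain k where k: "s k \<noteq> 0" "\<forall>m<k. s m = 0" by (rule first_nonzero)
  have beyond: "line_proj x (gen i s) m = line_proj x s m" if "k < m" for m
    using that by (intro line_proj_eq_beyond) (simp add: gen_first_nonzero[OF k])
  show ?thesis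
  proof (cases "\<exists>r\<ge>k. s r \<notin> {0, x}")
    case True
    have "line_proj x (gen i s) m = line_proj x s m" for m
    proof (cases "k < m")
      case False
      obtain r where "k \<le> r" "s r \<notin> {0, x}" using True by blast
      then have "line_proj x s m = 0" using False by (intro line_proj_bad[of m r]) auto
      then show ?thesis using line_proj_gen_bad[OF k True] False by simp
    qed (rule beyond)
    then show ?thesis by auto
  next
    case False
    then have line: "\<forall>m. s m \<in> {0, x}" using k(2) by (metis insertI1 not_le)
    show ?thesis
    proof (cases "i = x")
      case False
      have "line_proj x (gen i s) m = line_proj x s m" for m
        using beyond[of m] line_proj_gen_line[OF k line, of i m] line_proj_id[OF line] \<open>i \<noteq> x\<close> assms
        by (cases "k < m") auto
      then show ?thesis by auto
    qed (use line in simp)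
  qed
qed

definition top_diff :: "nat word \<Rightarrow> nat word \<Rightarrow> nat \<Rightarrow> bool" where
  "top_diff a b G \<longleftrightarrow> a G \<noteq> b G \<and> (\<forall>m>G. a m = b m)"

lemma top_diff_unique: "top_diff a b G \<Longrightarrow> top_diff a b G' \<Longrightarrow> G = G'"
  unfolding top_diff_def by (metis linorder_neqE_nat)

lemma top_diff_exists:
  assumes "a \<noteq> b" "suffix N a = suffix N b"
  obtains G where "top_diff a b G"
proof -
  have fin: "finite {m. a m \<noteq> b m}"
  proof (rule finite_subset)
    show "{m. a m \<noteq> b m} \<subseteq> {..<N}"
      using assms(2) by (auto simp: fun_eq_iff) (metis le_add_diff_inverse not_less)
  qed simp
  have ne: "{m. a m \<noteq> b m} \<noteq> {}" using assms(1) by auto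
  have "top_diff a b (Max {m. a m \<noteq> b m})"
    using Max_in[OF fin ne] Max_less_iff[OF fin ne] unfolding top_diff_def by auto
  then show thesis by (rule that)
qed

text \<open>Which of the two ends of the line containing \<open>t\<close> the word \<open>s\<close> lies in: its projection is
  compared with \<open>t\<close> at their highest difference, the order in which \<open>gen x\<close> counts
  (\<open>x\<close> is the digit 0 and \<open>0\<close> the digit 1 of a binary odometer).\<close>
definition below :: "nat \<Rightarrow> nat word \<Rightarrow> nat word \<Rightarrow> bool" where
  "below x t s \<longleftrightarrow> (\<exists>G. top_diff (line_proj x s) t G \<and> line_proj x s G = 0)"

lemma below_iff: "top_diff (line_proj x s) t G \<Longrightarrow> below x t s \<longleftrightarrow> line_proj x s G = 0"
  unfolding below_def using top_diff_unique by blast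

lemma below_gen_on_line:
  assumes x: "x \<noteq> 0" and t: "\<forall>m. t m \<in> {0, x}" and s: "\<forall>m. s m \<in> {0, x}" "s \<noteq> (\<lambda>_. 0)"
    and N: "suffix N s = suffix N t" and "s \<noteq> t" "gen x s \<noteq> t"
  shows "below x t (gen x s) \<longleftrightarrow> below x t s"
proof -
  obtain k where k: "s k \<noteq> 0" "\<forall>m<k. s m = 0" using s(2) by (rule first_nonzero)
  have sk: "s k = x" using s(1)[rule_format, of k] k(1) by simp
  have gs: "gen x s = (\<lambda>m. if m < k then x else if m = k then 0 else s m)"
    using sk by (simp add: gen_first_nonzero[OF k] fun_eq_iff)
  have gL: "\<forall>m. gen x s m \<in> {0, x}" using s(1) by (simp add: gs)
  note proj = line_proj_id[OF s(1)] line_proj_id[OF gL]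
  have "suffix (N + Suc k) (gen x s) = suffix (N + Suc k) t"
    using suffix_gen[of s k "N + Suc k" x] k(1) suffix_eq_mono[OF N, of "N + Suc k"] by simp
  then obtain G' where G': "top_diff (gen x s) t G'" using top_diff_exists assms(7) by blast
  obtain G where G: "top_diff s t G" using top_diff_exists[OF assms(6) N] .
  have below_s: "below x t s \<longleftrightarrow> s G = 0" using below_iff[of x s t G] G proj by simp
  have below_g: "below x t (gen x s) \<longleftrightarrow> gen x s G' = 0" using below_iff[of x "gen x s" t G'] G' proj by simp
  consider "k < G" | "G = k" | "G < k" by linarith
  then show ?thesis
  proof cases
    case 1
    then have "top_diff (gen x s) t G" using G by (simp add: top_diff_def gs)
    then have "G' = G" using G' top_diff_unique by blast
    then show ?thesis using below_s below_g 1 by (simp add: gs)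
  next
    case 2
    then have "t k = 0" using G sk t by (metis insertE singletonD top_diff_def)
    then have "G' < k"
      using G' G 2 by (auto simp: top_diff_def gs) (metis linorder_neqE_nat)
    then show ?thesis using below_s below_g 2 sk x by (simp add: gs)
  next
    case 3
    have "t k = x" using G 3 sk by (simp add: top_diff_def)
    then have "top_diff (gen x s) t k" using G 3 x by (auto simp: top_diff_def gs)
    then have "G' = k" using G' top_diff_unique by blast
    then show ?thesis using below_s below_g 3 k(2) by (simp add: gs)
  qed
qed

lemma below_gen:
  assumes x: "x \<noteq> 0" and t: "\<forall>m. t m \<in> {0, x}" "\<not> ev_const t" and i: "i \<noteq> 0"
    and N: "suffix N s = suffix N t" and "s \<noteq> t" "gen i s \<noteq> t"
  shows "below x t (gen i s) \<longleftrightarrow> below x t s"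
proof (cases "line_proj x (gen i s) = line_proj x s")
  case True
  then show ?thesis by (simp add: below_def)
next
  case False
  then have ix: "i = x" and line: "\<forall>m. s m \<in> {0, x}" using line_proj_gen[OF i] by blast+
  have nz: "s \<noteq> (\<lambda>_. 0)"
  proof
    assume "s = (\<lambda>_. 0)"
    then have "suffix N t = (\<lambda>_. 0)" using N by simp
    then show False using t(2) unfolding ev_const_def by blast
  qed
  show ?thesis using below_gen_on_line[OF x t(1) line nz N assms(6)] assms(7) ix by simp
qed

lemma infinite_letter_positions:
  assumes "\<not> ev_const t" "\<forall>m. t m \<in> {0, x}" "c \<in> {0, x}"
  shows "infinite {m. t m = c}"
proof
  assume "finite {m. t m = c}"
  then obtain N where N: "\<forall>m\<in>{m. t m = c}. m < N" unfolding finite_nat_set_iff_bounded by blast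
  define c' where "c' = (if c = 0 then x else 0)"
  have "t m = c'" if "m \<ge> N" for m
  proof -
    have "t m \<noteq> c" using N that by force
    then show ?thesis using assms(2)[rule_format, of m] assms(3) by (auto simp: c'_def)
  qed
  then have "suffix N t = (\<lambda>_. c')" by (simp add: fun_eq_iff)
  then show False using assms(1) unfolding ev_const_def by blast
qed

lemma inj_on_fun_upd_positions:
  assumes "c' \<noteq> c"
  shows "inj_on (\<lambda>m. t(m := c')) {m. t m = c}"
proof (rule inj_onI)
  fix a b assume ab: "a \<in> {m. t m = c}" "b \<in> {m. t m = c}" "t(a := c') = t(b := c')"
  show "a = b"
  proof (rule ccontr)
    assume "a \<noteq> b"
    then have "(t(a := c')) a = (t(b := c')) a" using ab(3) by simp
    then show False using ab(1) assms \<open>a \<noteq> b\<close> by simp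
  qed
qed

lemma below_edge:
  assumes t: "t \<in> Xinf p" "\<forall>m. t m \<in> {0, x}" "\<not> ev_const t" and x: "x \<noteq> 0"
    and ab: "(a, b) \<in> Restr (adj p) (orbit p t - {t})"
  shows "below x t a = below x t b"
proof -
  have "(a, b) \<in> adj p" using ab by simp
  then obtain i where i: "i \<in> {1..p}" "b = gen i a \<or> a = gen i b" unfolding adj_iff by blast
  have "a \<in> Cof p t" "b \<in> Cof p t" using ab orbit_subset_Cof[OF t(1,3)] by auto
  then obtain Na Nb where "suffix Na a = suffix Na t" "suffix Nb b = suffix Nb t" by (auto simp: Cof_iff)
  then show ?thesis using i ab below_gen[OF x t(2,3), of i] by auto
qed

lemma below_fun_upd:
  assumes t: "t \<in> Xinf p" "\<forall>m. t m \<in> {0, x}" and x: "x \<le> p" and c: "c \<in> {0, x}" "t m \<noteq> c"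
  shows "t(m := c) \<in> orbit p t - {t}" "below x t (t(m := c)) \<longleftrightarrow> c = 0"
proof -
  have "t(m := c) \<in> tail_set p (Suc m) {suffix (Suc m) t}"
    using t(1) x c by (auto simp: tail_set_def Xinf_def)
  then have "t(m := c) \<in> orbit p t" using tail_set_subset_orbit[OF tail_set_self[OF t(1)]] by blast
  moreover have "t(m := c) \<noteq> t" using c(2) by (metis fun_upd_same)
  ultimately show "t(m := c) \<in> orbit p t - {t}" by simp
  have "line_proj x (t(m := c)) = t(m := c)" using t(2) c by (intro line_proj_id) auto
  moreover have "top_diff (t(m := c)) t m" using c(2) by (simp add: top_diff_def)
  ultimately show "below x t (t(m := c)) \<longleftrightarrow> c = 0" using below_iff[of x "t(m := c)" t m] by simp
qed

lemma num_ends_line_ge_2: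
  assumes t: "t \<in> Xinf p" "\<forall>m. t m \<in> {0, x}" "\<not> ev_const t" and x: "x \<in> {1..p}"
  shows "2 \<le> num_ends p t"
proof -
  have x0: "x \<noteq> 0" "x \<le> p" using x by simp_all
  have P: "{t} \<subseteq> orbit p t" "finite {t}" "{t} \<noteq> {}" using orbit_self by auto
  define V where "V b = (if b then (\<lambda>m. t(m := 0)) ` {m. t m = x} else (\<lambda>m. t(m := x)) ` {m. t m = 0})"
    for b
  have "enat (card {True, False}) \<le> ecard (inf_comps p (orbit p t - {t}))"
  proof (rule card_labels_le_inf_comps[where lab = "below x t" and V = V, OF P])
    show "below x t a = below x t b" if "(a, b) \<in> Restr (adj p) (orbit p t - {t})" for a b
      using below_edge[OF t x0(1) that] .
  next
    fix l :: bool
    have "infinite (V l)"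
      using infinite_letter_positions[OF t(3,2)] inj_on_fun_upd_positions[of 0 x t]
        inj_on_fun_upd_positions[of x 0 t] x0(1)
      by (simp add: V_def finite_image_iff)
    moreover have "V l \<subseteq> orbit p t - {t} \<and> (\<forall>y\<in>V l. below x t y = l)"
      using below_fun_upd[OF t(1,2) x0(2), of 0] below_fun_upd[OF t(1,2) x0(2), of x] x0(1)
      by (cases l) (auto simp: V_def)
    ultimately show "infinite (V l) \<and> V l \<subseteq> orbit p t - {t} \<and> (\<forall>y\<in>V l. below x t y = l)" by blast
  qed simp
  then have "2 \<le> ecard (inf_comps p (orbit p t - {t}))" by (simp add: numeral_eq_enat numeral_2_eq_2)
  then show ?thesis by (rule num_ends_geI[OF P(2,1)])
qed

lemma num_ends_ev_two_letters_ge_2: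
  assumes v: "v \<in> Xinf p" "\<not> ev_const v" and x: "x \<in> {1..p}" and N: "\<forall>m\<ge>N. v m \<in> {0, x}"
  shows "2 \<le> num_ends p v"
proof -
  define t where "t = replicate N 0 \<frown> suffix N v"
  have tail: "suffix N t = suffix N v" by (simp add: t_def)
  have "t \<in> tail_set p N {suffix N v}" using v(1) tail by (simp add: tail_set_def t_def replicate_conc_Xinf suffix_Xinf)
  then have "t \<in> orbit p v" using tail_set_subset_orbit[OF tail_set_self[OF v(1)]] by blast
  moreover have "2 \<le> num_ends p t"
  proof (rule num_ends_line_ge_2[OF _ _ _ x])
    show "t \<in> Xinf p" using \<open>t \<in> tail_set p N {suffix N v}\<close> by (simp add: tail_set_def)
    show "\<forall>m. t m \<in> {0, x}" using N by (auto simp: t_def conc_def)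
    show "\<not> ev_const t" using v(2) ev_const_suffix_eq[OF tail] by simp
  qed
  ultimately show ?thesis using num_ends_orbit by metis
qed

section \<open>Classification of the orbits\<close>

definition ev_two_letters :: "nat \<Rightarrow> nat word \<Rightarrow> bool" where
  "ev_two_letters p v \<longleftrightarrow> (\<exists>x\<in>{1..p}. \<exists>N. \<forall>m\<ge>N. v m \<in> {0, x})"

lemma num_ends_cases:
  assumes "1 \<le> p" "v \<in> Xinf p"
  shows "num_ends p v = (if ev_const v then enat (2 * p) else if ev_two_letters p v then enat 2 else enat 1)"
proof -
  have "num_ends p v = enat 2" if "\<not> ev_const v" "ev_two_letters p v"
    using that num_ends_not_ev_const_le_2[OF assms(2)] num_ends_ev_two_letters_ge_2[OF assms(2)]
    unfolding ev_two_letters_def by (metis antisym numeral_eq_enat)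
  moreover have "num_ends p v = enat 1" if "\<not> ev_const v" "\<not> ev_two_letters p v"
    using that num_ends_le_1[OF assms(2)] num_ends_ge_1[OF assms(2,1)]
    unfolding ev_two_letters_def by (metis antisym one_enat_def)
  moreover have "num_ends p v = enat (2 * p)" if "ev_const v"
    using that num_ends_ev_const_le[OF assms(2)] num_ends_ev_const_ge[OF assms(2)] by (meson antisym)
  ultimately show ?thesis by auto
qed

lemma
  assumes "2 \<le> p"
  shows E_2p: "E p (2 * p) = {v \<in> Xinf p. ev_const v}"
    and E_2: "E p 2 = {v \<in> Xinf p. \<not> ev_const v \<and> ev_two_letters p v}"
    and E_1: "E p 1 = {v \<in> Xinf p. \<not> ev_const v \<and> \<not> ev_two_letters p v}"
proof -
  have p: "1 \<le> p" and "enat (2 * p) \<noteq> enat 2" "enat (2 * p) \<noteq> enat 1" "enat 2 \<noteq> enat 1"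
    using assms by auto
  then show "E p (2 * p) = {v \<in> Xinf p. ev_const v}"
    and "E p 2 = {v \<in> Xinf p. \<not> ev_const v \<and> ev_two_letters p v}"
    and "E p 1 = {v \<in> Xinf p. \<not> ev_const v \<and> \<not> ev_two_letters p v}"
    by (auto simp: E_def k_ended_def num_ends_cases[OF p] split: if_splits)
qed

lemma ev_const_eq_UN_Cof: "{v \<in> Xinf p. ev_const v} = (\<Union>j\<in>{0..p}. Cof p (\<lambda>_. j))"
proof
  show "{v \<in> Xinf p. ev_const v} \<subseteq> (\<Union>j\<in>{0..p}. Cof p (\<lambda>_. j))"
  proof
    fix v assume v: "v \<in> {v \<in> Xinf p. ev_const v}"
    then obtain N j where N: "suffix N v = (\<lambda>_. j)" unfolding ev_const_def by blast
    then have "j \<le> p" using v suffix_Xinf[of v p N] by (simp add: const_in_Xinf)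
    moreover have "v \<in> Cof p (\<lambda>_. j)" using v N by (auto simp: Cof_iff)
    ultimately show "v \<in> (\<Union>j\<in>{0..p}. Cof p (\<lambda>_. j))" by auto
  qed
  show "(\<Union>j\<in>{0..p}. Cof p (\<lambda>_. j)) \<subseteq> {v \<in> Xinf p. ev_const v}"
  proof
    fix v assume "v \<in> (\<Union>j\<in>{0..p}. Cof p (\<lambda>_. j))"
    then obtain j N where "v \<in> Xinf p" "suffix N v = (\<lambda>_. j)" by (auto simp: Cof_iff)
    then show "v \<in> {v \<in> Xinf p. ev_const v}" unfolding ev_const_def by blast
  qed
qed

lemma ev_two_letters_eq_UN_Cof:
  "{v \<in> Xinf p. ev_two_letters p v} = (\<Union>i\<in>{1..p}. \<Union>w\<in>{w. \<forall>n. w n \<in> {0, i}}. Cof p w)"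
proof
  show "{v \<in> Xinf p. ev_two_letters p v} \<subseteq> (\<Union>i\<in>{1..p}. \<Union>w\<in>{w. \<forall>n. w n \<in> {0, i}}. Cof p w)"
  proof
    fix v assume "v \<in> {v \<in> Xinf p. ev_two_letters p v}"
    then obtain i N where v: "v \<in> Xinf p" "i \<in> {1..p}" "\<forall>m\<ge>N. v m \<in> {0, i}"
      unfolding ev_two_letters_def by blast
    define w where "w = replicate N 0 \<frown> suffix N v"
    have "\<forall>n. w n \<in> {0, i}" using v(3) by (auto simp: w_def conc_def)
    moreover have "v \<in> Cof p w" using v(1) by (auto simp: Cof_iff w_def intro!: exI[of _ N])
    ultimately show "v \<in> (\<Union>i\<in>{1..p}. \<Union>w\<in>{w. \<forall>n. w n \<in> {0, i}}. Cof p w)" using v(2) by blast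
  qed
next
  show "(\<Union>i\<in>{1..p}. \<Union>w\<in>{w. \<forall>n. w n \<in> {0, i}}. Cof p w) \<subseteq> {v \<in> Xinf p. ev_two_letters p v}"
  proof
    fix v assume "v \<in> (\<Union>i\<in>{1..p}. \<Union>w\<in>{w. \<forall>n. w n \<in> {0, i}}. Cof p w)"
    then obtain i w N where "i \<in> {1..p}" "\<forall>n. w n \<in> {0, i}" "v \<in> Xinf p" "suffix N v = suffix N w"
      by (auto simp: Cof_iff)
    then have "\<forall>m\<ge>N. v m \<in> {0, i}" by (metis le_add_diff_inverse suffix_nth)
    then show "v \<in> {v \<in> Xinf p. ev_two_letters p v}"
      using \<open>i \<in> {1..p}\<close> \<open>v \<in> Xinf p\<close> unfolding ev_two_letters_def by blast
  qed
qed

lemma countable_orbit: "countable (orbit p v)"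
proof -
  have sub: "adj p `` Y \<subseteq> (\<Union>y\<in>Y. \<Union>i\<in>{1..p}. {gen i y} \<union> gen i -` {y})" for Y
  proof
    fix z assume "z \<in> adj p `` Y"
    then obtain y i where "y \<in> Y" "i \<in> {1..p}" "z = gen i y \<or> y = gen i z"
      unfolding Image_iff adj_iff by blast
    then show "z \<in> (\<Union>y\<in>Y. \<Union>i\<in>{1..p}. {gen i y} \<union> gen i -` {y})" by blast
  qed
  have fin: "finite ({gen i y} \<union> gen i -` {y})" if "i \<in> {1..p}" for i y
    using that by (auto intro!: finite_vimageI inj_gen)
  have step: "countable (adj p `` Y)" if "countable Y" for Y
  proof (rule countable_subset[OF sub])
    show "countable (\<Union>y\<in>Y. \<Union>i\<in>{1..p}. {gen i y} \<union> gen i -` {y})"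
    proof (rule countable_UN[OF that])
      fix y show "countable (\<Union>i\<in>{1..p}. {gen i y} \<union> gen i -` {y})"
        by (rule countable_finite) (use fin in auto)
    qed
  qed
  have "countable ((adj p)\<^sup>* `` {v})" using countable_rtrancl[OF step] by simp
  then show ?thesis by (simp add: orbit_def Image_def)
qed

lemma uncountable_orbits:
  assumes "uncountable S"
  shows "uncountable {orbit p w | w. w \<in> S}"
proof
  assume "countable {orbit p w | w. w \<in> S}"
  then have "countable (\<Union>X\<in>{orbit p w | w. w \<in> S}. X)"
    by (rule countable_UN) (auto simp: countable_orbit)
  moreover have "S \<subseteq> (\<Union>X\<in>{orbit p w | w. w \<in> S}. X)" using orbit_self by blast
  ultimately show False using assms countable_subset by blast
qed

lemma uncountable_nat_sets: "uncountable (UNIV :: nat set set)"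
  using Cantors_theorem[of "UNIV :: nat set"] unfolding uncountable_def by auto

text \<open>Every third letter is free to be 0 or 1, which encodes an arbitrary set of naturals; the
  fixed letters \<open>a\<close>, \<open>b\<close> in between prescribe the class of the word.\<close>
lemma uncountable_by_pattern:
  assumes "1 \<le> p" "a \<le> p" "b \<le> p"
    and S: "\<And>w. w \<in> Xinf p \<Longrightarrow> (\<And>m. m mod 3 = 0 \<Longrightarrow> w m = a) \<Longrightarrow> (\<And>m. m mod 3 = 1 \<Longrightarrow> w m = b)
      \<Longrightarrow> (\<And>m. m mod 3 = 2 \<Longrightarrow> w m \<in> {0, 1}) \<Longrightarrow> w \<in> S"
  shows "uncountable S"
proof -
  define f where "f B m = (if m mod 3 = 0 then a else if m mod 3 = 1 then b else if m div 3 \<in> B then 1 else 0)"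
    for B :: "nat set" and m
  have free: "f B (3 * k + 2) = (if k \<in> B then 1 else 0)" for B k
  proof -
    have "(3 * k + 2) mod 3 = 2" by presburger
    moreover have "(3 * k + 2) div 3 = k" by simp
    ultimately show ?thesis by (simp add: f_def)
  qed
  have "inj f"
  proof (rule injI)
    fix B B' assume eq: "f B = f B'"
    have "k \<in> B \<longleftrightarrow> k \<in> B'" for k
      using fun_cong[OF eq, of "3 * k + 2"] unfolding free by (cases "k \<in> B"; cases "k \<in> B'") simp_all
    then show "B = B'" by blast
  qed
  moreover have "range f \<subseteq> S"
  proof
    fix w assume "w \<in> range f"
    then obtain B where w: "w = f B" by blast
    show "w \<in> S"
    proof (rule S)
      show "w \<in> Xinf p" using assms(1-3) by (auto simp: w f_def Xinf_def)
      show "w m \<in> {0, 1}" if "m mod 3 = 2" for m using that by (simp add: w f_def)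
    qed (simp_all add: w f_def)
  qed
  moreover have "uncountable (range f)"
    using uncountable_nat_sets countable_image_inj_on[of f UNIV] \<open>inj f\<close> by auto
  ultimately show ?thesis using countable_subset by blast
qed

lemma pattern_not_ev_const:
  assumes "\<And>m. m mod 3 = 0 \<Longrightarrow> w m = a" "\<And>m. m mod 3 = 1 \<Longrightarrow> w m = b" "a \<noteq> b"
  shows "\<not> ev_const w"
proof
  assume "ev_const w"
  then obtain N j where "suffix N w = (\<lambda>_. j)" unfolding ev_const_def by blast
  then have wj: "w (N + k) = j" for k by (metis suffix_nth)
  have "w (3 * N) = j" "w (3 * N + 1) = j" using wj[of "2 * N"] wj[of "2 * N + 1"] by simp_all
  moreover have "(3 * N) mod 3 = 0" "(3 * N + 1) mod 3 = 1" by simp_all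
  ultimately have "a = j" "b = j" using assms(1,2) by metis+
  then show False using assms(3) by simp
qed

lemma uncountable_E_2:
  assumes "2 \<le> p"
  shows "uncountable {orbit p w | w. w \<in> E p 2}"
proof (intro uncountable_orbits uncountable_by_pattern[of p 1 0])
  fix w assume w: "w \<in> Xinf p" "\<And>m. m mod 3 = 0 \<Longrightarrow> w m = 1" "\<And>m. m mod 3 = 1 \<Longrightarrow> w m = 0"
    "\<And>m. m mod 3 = 2 \<Longrightarrow> w m \<in> {0, 1}"
  have "w m \<in> {0, 1}" for m
  proof -
    have "m mod 3 = 0 \<or> m mod 3 = 1 \<or> m mod 3 = 2" by presburger
    then show ?thesis using w(2-4)[of m] by auto
  qed
  moreover have "(1::nat) \<in> {1..p}" using assms by simp
  ultimately have "ev_two_letters p w" unfolding ev_two_letters_def by blast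
  moreover have "\<not> ev_const w" by (rule pattern_not_ev_const[of w 1 0]) (use w(2,3) in auto)
  ultimately show "w \<in> E p 2" unfolding E_2[OF assms] using w(1) by simp
qed (use assms in auto)

lemma uncountable_E_1:
  assumes "2 \<le> p"
  shows "uncountable {orbit p w | w. w \<in> E p 1}"
proof (intro uncountable_orbits uncountable_by_pattern[of p 1 2])
  fix w assume w: "w \<in> Xinf p" "\<And>m. m mod 3 = 0 \<Longrightarrow> w m = 1" "\<And>m. m mod 3 = 1 \<Longrightarrow> w m = 2"
  have "\<not> ev_two_letters p w"
  proof
    assume "ev_two_letters p w"
    then obtain x N where "\<forall>m\<ge>N. w m \<in> {0, x}" unfolding ev_two_letters_def by blast
    then have "w (3 * N) \<in> {0, x}" "w (3 * N + 1) \<in> {0, x}" by simp_all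
    moreover have "w (3 * N) = 1" by (rule w(2)) simp
    moreover have "w (3 * N + 1) = 2" by (rule w(3)) simp
    ultimately show False by auto
  qed
  moreover have "\<not> ev_const w" by (rule pattern_not_ev_const[of w 1 2]) (use w(2,3) in auto)
  ultimately show "w \<in> E p 1" unfolding E_1[OF assms] using w(1) by simp
qed (use assms in auto)

section \<open>The Bernoulli measure\<close>

definition cylinder :: "nat set \<Rightarrow> nat set \<Rightarrow> nat word set" where
  "cylinder J A = {w. \<forall>m\<in>J. w m \<in> A}"

lemma prob_space_nu: "prob_space (nu p)"
  unfolding nu_def by (intro prob_space_PiM measure_pmf.prob_space_axioms)

lemma space_nu: "space (nu p) = UNIV"
  unfolding nu_def by (simp add: space_PiM)

lemma cylinder_eq_prod_emb:
  "cylinder J A = prod_emb UNIV (\<lambda>_. measure_pmf (pmf_of_set {0..p})) J (PiE J (\<lambda>_. A))"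
  unfolding cylinder_def prod_emb_def by (auto simp: space_PiM PiE_iff)

lemma cylinder_sets: "finite J \<Longrightarrow> cylinder J A \<in> sets (nu p)"
  unfolding cylinder_eq_prod_emb[of J A p] nu_def by (rule sets_PiM_I) auto

lemma emeasure_cylinder:
  assumes "finite J"
  shows "emeasure (nu p) (cylinder J A) = ennreal (card ({0..p} \<inter> A) / Suc p) ^ card J"
proof -
  have "emeasure (nu p) (cylinder J A) = (\<Prod>m\<in>J. emeasure (measure_pmf (pmf_of_set {0..p})) A)"
    unfolding cylinder_eq_prod_emb[of J A p] nu_def
    by (rule emeasure_PiM_emb) (auto simp: assms measure_pmf.prob_space_axioms)
  also have "\<dots> = (\<Prod>m\<in>J. ennreal (card ({0..p} \<inter> A) / Suc p))"
    using emeasure_pmf_of_set[of "{0..p}" A] by (simp add: ennreal_of_nat_eq_real_of_nat divide_ennreal)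
  finally show ?thesis by simp
qed

definition two_letter_tail :: "nat \<Rightarrow> nat \<Rightarrow> nat word set" where
  "two_letter_tail i N = {w. \<forall>m\<ge>N. w m \<in> {0, i}}"

lemma two_letter_tail_sets: "two_letter_tail i N \<in> sets (nu p)"
proof -
  have "two_letter_tail i N = (\<Inter>k. cylinder {N + k} {0, i})"
    unfolding two_letter_tail_def cylinder_def by (auto simp: le_iff_add)
  also have "\<dots> \<in> sets (nu p)" by (rule sets.countable_INT) (auto intro!: cylinder_sets)
  finally show ?thesis .
qed

text \<open>The \<open>K\<close> letters after position \<open>N\<close> all lie in \<open>{0, i}\<close> with probability
  \<open>(2 / (p + 1))\<^sup>K\<close>, which tends to 0 for \<open>p \<ge> 2\<close>.\<close>
lemma two_letter_tail_null:
  assumes "2 \<le> p" "i \<in> {1..p}"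
  shows "two_letter_tail i N \<in> null_sets (nu p)"
proof -
  define r :: real where "r = 2 / Suc p"
  have r: "0 \<le> r" "r < 1" using assms(1) by (auto simp: r_def)
  have "card ({0..p} \<inter> {0, i}) = 2" using assms(2) by auto
  then have bound: "emeasure (nu p) (two_letter_tail i N) \<le> ennreal (r ^ K)" for K
  proof -
    have "two_letter_tail i N \<subseteq> cylinder {N..<N + K} {0, i}"
      unfolding two_letter_tail_def cylinder_def by auto
    then have "emeasure (nu p) (two_letter_tail i N) \<le> emeasure (nu p) (cylinder {N..<N + K} {0, i})"
      by (intro emeasure_mono cylinder_sets) auto
    also have "\<dots> = ennreal r ^ K"
      using emeasure_cylinder[of "{N..<N + K}" p "{0, i}"] \<open>card ({0..p} \<inter> {0, i}) = 2\<close>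
      by (simp add: r_def)
    finally show ?thesis by (simp add: ennreal_power r)
  qed
  have "(\<lambda>K. ennreal (r ^ K)) \<longlonglongrightarrow> ennreal 0"
    by (intro tendsto_ennrealI LIMSEQ_power_zero) (use r in auto)
  then have "emeasure (nu p) (two_letter_tail i N) \<le> ennreal 0"
    by (rule LIMSEQ_le_const) (use bound in auto)
  then show ?thesis using two_letter_tail_sets by (auto simp: null_sets_def)
qed

lemma emeasure_Xinf: "emeasure (nu p) (Xinf p) = 1"
proof -
  have null: "cylinder {n} (- {0..p}) \<in> null_sets (nu p)" for n
    using emeasure_cylinder[of "{n}" p "- {0..p}"] cylinder_sets[of "{n}"] by (auto simp: null_sets_def)
  have "Xinf p = space (nu p) - (\<Union>n. cylinder {n} (- {0..p}))"
    unfolding Xinf_def cylinder_def space_nu by auto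
  then have "emeasure (nu p) (Xinf p) = emeasure (nu p) (space (nu p))"
    using emeasure_Diff_null_set[of "\<Union>n. cylinder {n} (- {0..p})" "nu p" "space (nu p)"] null by auto
  then show ?thesis using prob_space.emeasure_space_1[OF prob_space_nu] by simp
qed

lemma emeasure_E_1:
  assumes "2 \<le> p"
  shows "emeasure (nu p) (E p 1) = 1"
proof -
  have E1: "E p 1 = Xinf p - (\<Union>i\<in>{1..p}. \<Union>N. two_letter_tail i N)"
  proof -
    have "ev_const v \<Longrightarrow> v \<in> Xinf p \<Longrightarrow> ev_two_letters p v" for v
    proof -
      assume "ev_const v" "v \<in> Xinf p"
      then obtain N j where N: "suffix N v = (\<lambda>_. j)" unfolding ev_const_def by blast
      then have "j \<le> p" using \<open>v \<in> Xinf p\<close> suffix_Xinf[of v p N] by (simp add: const_in_Xinf)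
      have "v m = j" if "m \<ge> N" for m using fun_cong[OF N, of "m - N"] that by simp
      then have "\<forall>m\<ge>N. v m \<in> {0, max 1 j}" by (simp add: max_def)
      moreover have "max 1 j \<in> {1..p}" using \<open>j \<le> p\<close> assms by auto
      ultimately show "ev_two_letters p v" unfolding ev_two_letters_def by blast
    qed
    then show ?thesis unfolding E_1[OF assms] ev_two_letters_def two_letter_tail_def by blast
  qed
  have null: "(\<Union>i\<in>{1..p}. \<Union>N. two_letter_tail i N) \<in> null_sets (nu p)"
    using two_letter_tail_null[OF assms] by blast
  have X: "Xinf p \<in> sets (nu p)"
  proof -
    have "Xinf p = (\<Inter>n. cylinder {n} {0..p})" unfolding Xinf_def cylinder_def by auto
    also have "\<dots> \<in> sets (nu p)" by (rule sets.countable_INT) (auto intro!: cylinder_sets)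
    finally show ?thesis .
  qed
  show ?thesis unfolding E1 emeasure_Diff_null_set[OF null X] by (rule emeasure_Xinf)
qed

theorem theorem4p16:
  fixes p :: nat
  assumes "p \<ge> 2"
  shows "(\<forall>v \<in> Xinf p. k_ended p (2*p) v \<or> k_ended p 2 v \<or> k_ended p 1 v)
    \<and> E p (2*p) = (\<Union>j\<in>{0..p}. Cof p (\<lambda>_. j))
    \<and> (\<exists>v \<in> Xinf p. E p (2*p) = orbit p v)
    \<and> E p 2 = (\<Union>i\<in>{1..p}. \<Union>w\<in>{w. \<forall>n. w n \<in> {0, i}}. Cof p w) - E p (2*p)
    \<and> uncountable {orbit p w | w. w \<in> E p 2}
    \<and> E p 1 = Xinf p - (E p (2*p) \<union> E p 2)
    \<and> uncountable {orbit p w | w. w \<in> E p 1}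
    \<and> emeasure (nu p) (E p 1) = 1"
proof (intro conjI)
  show "\<forall>v \<in> Xinf p. k_ended p (2*p) v \<or> k_ended p 2 v \<or> k_ended p 1 v"
    using assms by (auto simp: k_ended_def num_ends_cases)
  show "E p (2*p) = (\<Union>j\<in>{0..p}. Cof p (\<lambda>_. j))"
    unfolding E_2p[OF assms] by (rule ev_const_eq_UN_Cof)
  show "\<exists>v \<in> Xinf p. E p (2*p) = orbit p v"
    using E_2p[OF assms] orbit_zeros const_in_Xinf by blast
  show "E p 2 = (\<Union>i\<in>{1..p}. \<Union>w\<in>{w. \<forall>n. w n \<in> {0, i}}. Cof p w) - E p (2*p)"
    unfolding E_2[OF assms] E_2p[OF assms] ev_two_letters_eq_UN_Cof[symmetric] by blast
  show "E p 1 = Xinf p - (E p (2*p) \<union> E p 2)"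
    unfolding E_1[OF assms] E_2[OF assms] E_2p[OF assms] by blast
qed (use assms uncountable_E_2 uncountable_E_1 emeasure_E_1 in auto)

end
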